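(* Let $\mathcal{H}=\mathcal{H}_S\otimes\mathcal{H}_B$ with $\dim\mathcal{H}_S=d_S<\infty$, $\dim\mathcal{H}_B=d_B<\infty$. Let $H_0$ and $V$ be Hermitian operators on $\mathcal{H}$ and $H=H_0+V$. Fix real numbers $E$ and $\Delta>0$. Let $G$ be the spectral projector of $H$ onto the eigenvalues of $H$ lying in $[E,E+\Delta]$ and $F$ the spectral projector of $H_0$ onto the eigenvalues of $H_0$ lying in $[E,E+\Delta]$, and assume $\operatorname{rank}G\ge 1$ and $\operatorname{rank}F\ge1$. Define $\omega_\sqcap=G/\operatorname{rank}G$, $\omega_\sqcap^{(0)}=F/\operatorname{rank}F$, and $\omega_\sqcap^S=\operatorname{Tr}_B\omega_\sqcap$, $\omega_\sqcap^{S(0)}=\operatorname{Tr}_B\omega_\sqcap^{(0)}$. Let $\Omega_{\max}=\max(\operatorname{rank}G,\operatorname{rank}F)$, $\Omega_{\min}=\min(\operatorname{rank}G,\operatorname{rank}F)$, $\Delta\Omega=\Omega_{\max}-\Omega_{\min}$. For $0<\varepsilon<\Delta/2$, let $\Omega_\varepsilon$ be the total number of eigenvalues (counted with multiplicity) of $H$ together with those of $H_0$ that lie in $[E,E+\varepsilon)\cup(E+\Delta-\varepsilon,E+\Delta]$. Then for every $0<\varepsilon<\Delta/2$, $$\tfrac12\|\omega_\sqcap^S-\omega_\sqcap^{S(0)}\|_1\le \tfrac12\|\omega_\sqcap-\omega_\sqcap^{(0)}\|_1\le \frac{\|V\|_\infty}{\varepsilon}+\frac{\Delta\Omega+\Om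ega_\varepsilon}{2\,\Omega_{\max}}.$$
   Context: $\|\cdot\|_1$ denotes the trace norm and $\|\cdot\|_\infty$ the operator norm; $\operatorname{Tr}_B$ is the partial trace over $\mathcal{H}_B$. The quantity $\tfrac12\|\rho-\sigma\|_1$ is the trace distance. *)

theory Defs
  imports "Jordan_Normal_Form.Schur_Decomposition" "Jordan_Normal_Form.DL_Rank"
    "HOL-Computational_Algebra.Fundamental_Theorem_Algebra"
begin

text \<open>The composite space H_S (x) H_B of dimension dS*dB uses the Kronecker ordering:
  the basis vector |i> (x) |a> (i < dS, a < dB) has index i*dB + a.\<close>

definition hermitian_mat :: "nat \<Rightarrow> complex mat \<Rightarrow> bool" where
  "hermitian_mat n A \<longleftrightarrow> A \<in> carrier_mat n n \<and> mat_adjoint A = A"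

definition unitary_mat :: "nat \<Rightarrow> complex mat \<Rightarrow> bool" where
  "unitary_mat n U \<longleftrightarrow> U \<in> carrier_mat n n \<and> mat_adjoint U * U = 1\<^sub>m n"

definition real_diag_mat :: "nat \<Rightarrow> (nat \<Rightarrow> real) \<Rightarrow> complex mat" where
  "real_diag_mat n d = mat n n (\<lambda>(i,j). if i = j then complex_of_real (d i) else 0)"

definition spectral_projector :: "nat \<Rightarrow> complex mat \<Rightarrow> real set \<Rightarrow> complex mat \<Rightarrow> bool" where
  "spectral_projector n A S P \<longleftrightarrow>
     (\<exists>U d. unitary_mat n U \<and> A = U * real_diag_mat n d * mat_adjoint U \<and>
            P = U * real_diag_mat n (\<lambda>i. if d i \<in> S then 1 else 0) * mat_adjoint U)"

definition eig_count :: "complex mat \<Rightarrow> real set \<Rightarrow> nat" where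
  "eig_count A S = size (filter_mset (\<lambda>z. Im z = 0 \<and> Re z \<in> S) (proots (char_poly A)))"

definition mat_rank :: "nat \<Rightarrow> complex mat \<Rightarrow> nat" where
  "mat_rank n A = vec_space.rank n A"

definition partial_trace_B :: "nat \<Rightarrow> nat \<Rightarrow> complex mat \<Rightarrow> complex mat" where
  "partial_trace_B dS dB M = mat dS dS (\<lambda>(i,j). \<Sum>a<dB. M $$ (i*dB + a, j*dB + a))"

text \<open>Trace norm: sum of the singular values, i.e. of the square roots of the eigenvalues
  (with multiplicity) of X^* X.\<close>
definition trace_norm :: "complex mat \<Rightarrow> real" where
  "trace_norm X = (\<Sum>z\<in># proots (char_poly (mat_adjoint X * X)). sqrt (Re z))"

definition vec_norm2 :: "complex vec \<Rightarrow> real" where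
  "vec_norm2 v = sqrt (\<Sum>i<dim_vec v. (cmod (v $ i))\<^sup>2)"

definition op_norm :: "complex mat \<Rightarrow> real" where
  "op_norm A = Sup {vec_norm2 (A *\<^sub>v v) | v. v \<in> carrier_vec (dim_col A) \<and> vec_norm2 v \<le> 1}"

end

theory Submission
  imports Defs
begin

(*
  Both Hamiltonians are diagonalised, H = U diag(h) U^* and H0 = W diag(g) W^*, so the window
  projectors are G = U diag(1_J) U^* and F = W diag(1_K) W^* with rank G = |J|, rank F = |K|.

  (1) Partial trace does not increase the trace norm: for Hermitian X the trace norm is
      the value of tr(M X) at a Hermitian contraction M (the sign of X), and the partial trace is
      dual to the contraction-preserving map M |-> M (x) 1_B.
  (2) Write X = G/|J| - F/|K| = Z diag(x) Z^* and let Pi be the projector onto its positive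
      eigenvectors.  Since tr X = 0, ||X||_1 / 2 = tr(Pi X) = tG/|J| - tF/|K| with
      tG = tr(Pi G), tF = tr(Pi F).  For the projector R onto eigenvectors of H with eigenvalue at
      distance >= eps from the window boundary, a Davis-Kahan estimate gives
      ||(1 - F) R||_F^2 <= rank R * (||V|| / eps)^2; the positive part of the difference R - F of
      two projections has at most rank R eigenvalues whose squares sum to at most that
      quantity, whence tr(Pi (R - F)) <= rank R * ||V|| / eps.  Bounding the boundary
      eigenvectors trivially, and repeating the argument with H and H0 exchanged and Pi
      replaced by 1 - Pi, an elementary inequality between the two estimates gives (2).
*)

declare index_mult_mat(1)[simp del]

lemma adj_dims[simp]: "dim_row (mat_adjoint A) = dim_col A" "dim_col (mat_adjoint A) = dim_row A"
  unfolding mat_adjoint_def by simp_all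

lemma adj_index[simp]: "i < dim_col A \<Longrightarrow> j < dim_row A \<Longrightarrow> mat_adjoint A $$ (i,j) = cnj (A$$(j,i))"
  unfolding mat_adjoint_def by (simp add: mat_of_rows_index)

lemma adj_carrier[simp]: "A \<in> carrier_mat n m \<Longrightarrow> mat_adjoint A \<in> carrier_mat m n"
  unfolding carrier_mat_def by simp

lemma mult_entry: "A \<in> carrier_mat n k \<Longrightarrow> B \<in> carrier_mat k m \<Longrightarrow> i<n \<Longrightarrow> j<m \<Longrightarrow>
   (A*B)$$(i,j) = (\<Sum>l<k. A$$(i,l) * B$$(l,j))"
  by (subst index_mult_mat) (auto simp: scalar_prod_def lessThan_atLeast0)

lemma adj_adj[simp]: fixes A :: "complex mat" shows "mat_adjoint (mat_adjoint A) = A"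
proof (rule eq_matI)
  fix i j assume "i < dim_row A" "j < dim_col A"
  then show "mat_adjoint (mat_adjoint A) $$ (i, j) = A $$ (i, j)"
    by (subst adj_index) auto
qed auto

lemma mult_carrier_square[simp]: "A \<in> carrier_mat n n \<Longrightarrow> B \<in> carrier_mat n n \<Longrightarrow> A * B \<in> carrier_mat n n"
  by (rule mult_carrier_mat)

lemma adj_mult: fixes A B :: "complex mat"
  assumes A: "A \<in> carrier_mat n k" and B: "B \<in> carrier_mat k m"
  shows "mat_adjoint (A*B) = mat_adjoint B * mat_adjoint A"
proof (rule eq_matI)
  fix i j assume ij: "i < dim_row (mat_adjoint B * mat_adjoint A)" "j < dim_col (mat_adjoint B * mat_adjoint A)"
  then have i: "i < m" and j: "j < n" using A B by auto
  have "mat_adjoint (A*B) $$ (i,j) = cnj ((A*B) $$ (j,i))" using A B i j by (subst adj_index) auto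
  also have "\<dots> = (\<Sum>l<k. cnj (A$$(j,l)) * cnj (B$$(l,i)))"
    using A B i j by (simp add: mult_entry[OF A B])
  also have "\<dots> = (mat_adjoint B * mat_adjoint A) $$ (i,j)"
    using A B i j by (subst mult_entry[of _ m k _ n]) (auto intro!: sum.cong)
  finally show "mat_adjoint (A*B) $$ (i,j) = (mat_adjoint B * mat_adjoint A) $$ (i,j)" .
qed (use A B in auto)

lemma adj_minus: fixes A B :: "complex mat" assumes "A \<in> carrier_mat n n" "B \<in> carrier_mat n n"
  shows "mat_adjoint (A - B) = mat_adjoint A - mat_adjoint B"
  by (rule eq_matI) (use assms in auto)

lemma hermitianD: "hermitian_mat n A \<Longrightarrow> i<n \<Longrightarrow> j<n \<Longrightarrow> A$$(i,j) = cnj (A$$(j,i))"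
  unfolding hermitian_mat_def by (metis adj_index carrier_matD(1,2))

lemma real_diag_carrier[simp]: "real_diag_mat n d \<in> carrier_mat n n"
  unfolding real_diag_mat_def by simp

lemma real_diag_index[simp]: "i<n \<Longrightarrow> j<n \<Longrightarrow> real_diag_mat n d $$ (i,j) = (if i = j then complex_of_real (d i) else 0)"
  unfolding real_diag_mat_def by simp

lemma real_diag_dims[simp]: "dim_row (real_diag_mat n d) = n" "dim_col (real_diag_mat n d) = n"
  unfolding real_diag_mat_def by simp_all

lemma mult_diag_right: "A \<in> carrier_mat m n \<Longrightarrow> i<m \<Longrightarrow> j<n \<Longrightarrow>
   (A * real_diag_mat n d) $$ (i,j) = A$$(i,j) * d j"
proof -
  assume a: "A \<in> carrier_mat m n" "i<m" "j<n"
  have "(A * real_diag_mat n d) $$ (i,j) = (\<Sum>l<n. A$$(i,l) * real_diag_mat n d $$(l,j))"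
    using a by (simp add: mult_entry[of _ m n _ n])
  also have "\<dots> = (\<Sum>l<n. if l = j then A$$(i,j) * d j else 0)"
    using a by (intro sum.cong) auto
  finally show ?thesis using a by simp
qed

lemma unitaryD: assumes "unitary_mat n U"
  shows "U \<in> carrier_mat n n" "mat_adjoint U * U = 1\<^sub>m n" "U * mat_adjoint U = 1\<^sub>m n"
proof -
  show U: "U \<in> carrier_mat n n" using assms unfolding unitary_mat_def by simp
  show 1: "mat_adjoint U * U = 1\<^sub>m n" using assms unfolding unitary_mat_def by simp
  show "U * mat_adjoint U = 1\<^sub>m n"
    by (rule mat_mult_left_right_inverse[OF adj_carrier[OF U] U 1])
qed

lemma unitary_mult: assumes "unitary_mat n A" "unitary_mat n B" shows "unitary_mat n (A * B)"
proof -
  have A: "A \<in> carrier_mat n n" and B: "B \<in> carrier_mat n n" using assms unitaryD by auto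
  have "mat_adjoint (A*B) * (A*B) = mat_adjoint B * ((mat_adjoint A * A) * B)"
    using A B by (simp add: adj_mult[OF A B] assoc_mult_mat[of _ n n _ n _ n])
  also have "\<dots> = 1\<^sub>m n" using unitaryD[OF assms(1)] unitaryD[OF assms(2)] B by simp
  finally show ?thesis unfolding unitary_mat_def using A B by simp
qed

text \<open>A vector of C^n is a function read on {..<n}.\<close>
definition cinner :: "nat \<Rightarrow> (nat \<Rightarrow> complex) \<Rightarrow> (nat \<Rightarrow> complex) \<Rightarrow> complex" where
  "cinner n x y = (\<Sum>i<n. cnj (x i) * y i)"
definition sqnorm :: "nat \<Rightarrow> (nat \<Rightarrow> complex) \<Rightarrow> real" where
  "sqnorm n x = (\<Sum>i<n. (cmod (x i))^2)"
definition mulv :: "nat \<Rightarrow> complex mat \<Rightarrow> (nat \<Rightarrow> complex) \<Rightarrow> (nat \<Rightarrow> complex)" where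
  "mulv n A x = (\<lambda>i. \<Sum>j<n. A$$(i,j) * x j)"
definition colv :: "complex mat \<Rightarrow> nat \<Rightarrow> (nat \<Rightarrow> complex)" where
  "colv A k = (\<lambda>i. A$$(i,k))"
definition ctrace :: "nat \<Rightarrow> complex mat \<Rightarrow> complex" where
  "ctrace n A = (\<Sum>i<n. A$$(i,i))"

lemma cnj_mult_self: "complex_of_real ((cmod z)^2) = cnj z * z"
  by (metis complex_norm_square mult.commute)

lemma sqnorm_cinner: "complex_of_real (sqnorm n x) = cinner n x x"
  unfolding sqnorm_def cinner_def of_real_sum by (rule sum.cong[OF refl]) (rule cnj_mult_self)

lemma sqnorm_nonneg: "sqnorm n x \<ge> 0"
  unfolding sqnorm_def by (simp add: sum_nonneg)

lemma sum_kronecker_right: fixes n :: nat assumes "j < n"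
  shows "(\<Sum>i<n. f i * (if i = j then c else 0)) = f j * (c::complex)"
proof -
  have "(\<Sum>i<n. f i * (if i = j then c else 0)) = (\<Sum>i<n. if i = j then f j * c else 0)"
    by (intro sum.cong) auto
  also have "\<dots> = f j * c" using assms by (subst sum.delta) auto
  finally show ?thesis .
qed

lemma sum_kronecker_left: fixes n :: nat assumes "j < n"
  shows "(\<Sum>i<n. (if j = i then c i else 0) * f i) = c j * (f j :: complex)"
proof -
  have "(\<Sum>i<n. (if j = i then c i else 0) * f i) = (\<Sum>i<n. if i = j then c j * f j else 0)"
    by (intro sum.cong) auto
  also have "\<dots> = c j * f j" using assms by (subst sum.delta) auto
  finally show ?thesis .
qed

lemma cinner_cong: "(\<And>i. i < n \<Longrightarrow> y i = y' i) \<Longrightarrow> cinner n x y = cinner n x y'"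
  unfolding cinner_def by (rule sum.cong) auto
lemma cinner_cong_left: "(\<And>i. i < n \<Longrightarrow> y i = y' i) \<Longrightarrow> cinner n y x = cinner n y' x"
  unfolding cinner_def by (rule sum.cong) auto
lemma cinner_scale_right: "cinner n x (\<lambda>i. c * y i) = c * cinner n x y"
  unfolding cinner_def by (simp add: sum_distrib_left mult_ac)
lemma cinner_scale_left: "cinner n (\<lambda>i. c * y i) x = cnj c * cinner n y x"
  unfolding cinner_def by (simp add: sum_distrib_left mult_ac)
lemma cinner_add_right: "cinner n x (\<lambda>i. y i + z i) = cinner n x y + cinner n x z"
  unfolding cinner_def by (simp add: distrib_left sum.distrib)
lemma cinner_diff_right: "cinner n x (\<lambda>i. y i - z i) = cinner n x y - cinner n x z"
  unfolding cinner_def by (simp add: right_diff_distrib sum_subtractf)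
lemma cinner_diff_left: "cinner n (\<lambda>i. y i - z i) x = cinner n y x - cinner n z x"
  unfolding cinner_def by (simp add: left_diff_distrib sum_subtractf)
lemma cinner_conj: "cnj (cinner n x y) = cinner n y x"
  unfolding cinner_def cnj_sum by (simp add: mult.commute)
lemma cmod_cinner_swap: "cmod (cinner n x y) = cmod (cinner n y x)"
  by (metis complex_mod_cnj cinner_conj)

lemma cinner_sum_right: "cinner n x (\<lambda>i. \<Sum>k\<in>K. c k * v k i) = (\<Sum>k\<in>K. c k * cinner n x (v k))"
proof -
  have "cinner n x (\<lambda>i. \<Sum>k\<in>K. c k * v k i) = (\<Sum>i<n. \<Sum>k\<in>K. c k * (cnj (x i) * v k i))"
    unfolding cinner_def by (intro sum.cong refl) (simp add: sum_distrib_left mult_ac)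
  also have "\<dots> = (\<Sum>k\<in>K. \<Sum>i<n. c k * (cnj (x i) * v k i))" by (rule sum.swap)
  also have "\<dots> = (\<Sum>k\<in>K. c k * cinner n x (v k))" unfolding cinner_def by (simp add: sum_distrib_left)
  finally show ?thesis .
qed

lemma cinner_sum_left: "cinner n (\<lambda>i. \<Sum>k\<in>K. c k * v k i) x = (\<Sum>k\<in>K. cnj (c k) * cinner n (v k) x)"
proof -
  have "cinner n (\<lambda>i. \<Sum>k\<in>K. c k * v k i) x = cnj (cinner n x (\<lambda>i. \<Sum>k\<in>K. c k * v k i))"
    by (simp add: cinner_conj)
  also have "\<dots> = (\<Sum>k\<in>K. cnj (c k) * cinner n (v k) x)"
    unfolding cinner_sum_right cnj_sum by (simp add: cinner_conj)
  finally show ?thesis .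
qed

lemma unitary_cols: assumes "unitary_mat n U" "k<n" "l<n"
  shows "cinner n (colv U k) (colv U l) = (if k = l then 1 else 0)"
proof -
  have U: "U \<in> carrier_mat n n" using unitaryD[OF assms(1)] by simp
  have "(mat_adjoint U * U) $$ (k,l) = (\<Sum>i<n. cnj (U$$(i,k)) * U$$(i,l))"
    using U assms by (subst mult_entry[of _ n n _ n]) (auto intro!: sum.cong)
  then show ?thesis using unitaryD(2)[OF assms(1)] assms unfolding cinner_def colv_def by simp
qed

lemma unitary_rows: assumes "unitary_mat n U" "i<n" "j<n"
  shows "(\<Sum>k<n. U$$(i,k) * cnj (U$$(j,k))) = (if i = j then 1 else 0)"
proof -
  have U: "U \<in> carrier_mat n n" using unitaryD[OF assms(1)] by simp
  have "(U * mat_adjoint U) $$ (i,j) = (\<Sum>k<n. U$$(i,k) * cnj (U$$(j,k)))"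
    using U assms by (subst mult_entry[of _ n n _ n]) (auto intro!: sum.cong)
  then show ?thesis using unitaryD(3)[OF assms(1)] assms by simp
qed

lemma sqnorm_col: assumes "unitary_mat n U" "k < n" shows "sqnorm n (colv U k) = 1"
  using sqnorm_cinner[of n "colv U k"] unitary_cols[OF assms(1) assms(2) assms(2)] by simp

lemma resolution: assumes "unitary_mat n C"
  shows "cinner n x y = (\<Sum>m<n. cinner n x (colv C m) * cinner n (colv C m) y)"
proof -
  have "(\<Sum>m<n. cinner n x (colv C m) * cinner n (colv C m) y)
      = (\<Sum>m<n. \<Sum>i<n. \<Sum>j<n. cnj (x i) * y j * (C$$(i,m) * cnj (C$$(j,m))))"
    unfolding cinner_def colv_def sum_product by (intro sum.cong refl) (simp add: mult_ac)
  also have "\<dots> = (\<Sum>i<n. \<Sum>j<n. \<Sum>m<n. cnj (x i) * y j * (C$$(i,m) * cnj (C$$(j,m))))"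
    by (subst sum.swap) (rule sum.cong[OF refl], rule sum.swap)
  also have "\<dots> = (\<Sum>i<n. \<Sum>j<n. cnj (x i) * y j * (if i = j then 1 else 0))"
    by (intro sum.cong refl) (simp add: unitary_rows[OF assms] flip: sum_distrib_left)
  also have "\<dots> = cinner n x y"
    unfolding cinner_def by (intro sum.cong refl) (simp add: if_distrib sum.delta' cong: if_cong)
  finally show ?thesis by simp
qed

lemma parseval: assumes "unitary_mat n U"
  shows "(\<Sum>k<n. (cmod (cinner n (colv U k) x))^2) = sqnorm n x"
proof -
  have "complex_of_real (\<Sum>k<n. (cmod (cinner n (colv U k) x))^2)
      = (\<Sum>k<n. cinner n (colv U k) x * cnj (cinner n (colv U k) x))"
    unfolding of_real_sum by (rule sum.cong[OF refl]) (simp only: cnj_mult_self mult.commute)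
  also have "\<dots> = (\<Sum>k<n. cinner n x (colv U k) * cinner n (colv U k) x)"
    by (simp only: cinner_conj mult.commute)
  also have "\<dots> = cinner n x x" by (rule resolution[OF assms, symmetric])
  also have "\<dots> = complex_of_real (sqnorm n x)" by (rule sqnorm_cinner[symmetric])
  finally show ?thesis using of_real_eq_iff by blast
qed

lemma bessel: assumes fin: "finite K"
  and orth: "\<And>k l. k \<in> K \<Longrightarrow> l \<in> K \<Longrightarrow> cinner n (f k) (f l) = (if k = l then 1 else 0)"
  shows "(\<Sum>k\<in>K. (cmod (cinner n (f k) y))^2) \<le> sqnorm n y"
proof -
  define a where "a k = cinner n (f k) y" for k
  define g where "g i = (\<Sum>k\<in>K. a k * f k i)" for i
  have gf: "cinner n g (f l) = cnj (a l)" if l: "l \<in> K" for l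
  proof -
    have "cinner n g (f l) = (\<Sum>k\<in>K. cnj (a k) * (if k = l then 1 else 0))"
      unfolding g_def cinner_sum_left by (intro sum.cong refl) (simp add: orth l)
    also have "\<dots> = cnj (a l)" using l fin by (simp add: if_distrib cong: if_cong)
    finally show ?thesis .
  qed
  have gy: "cinner n g y = (\<Sum>k\<in>K. cnj (a k) * a k)"
    unfolding g_def cinner_sum_left a_def ..
  have yg: "cinner n y g = (\<Sum>k\<in>K. a k * cnj (a k))"
    unfolding g_def cinner_sum_right a_def cinner_conj ..
  have "cinner n g g = cinner n g (\<lambda>i. \<Sum>k\<in>K. a k * f k i)" unfolding g_def[abs_def] ..
  also have "\<dots> = (\<Sum>k\<in>K. a k * cnj (a k))"
    unfolding cinner_sum_right by (intro sum.cong refl) (simp add: gf)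
  finally have gg: "cinner n g g = (\<Sum>k\<in>K. a k * cnj (a k))" .
  have "complex_of_real (sqnorm n (\<lambda>i. y i - g i)) = cinner n y y - (\<Sum>k\<in>K. a k * cnj (a k))"
    unfolding sqnorm_cinner cinner_diff_left cinner_diff_right gy yg gg by (simp add: mult.commute)
  also have "\<dots> = complex_of_real (sqnorm n y - (\<Sum>k\<in>K. (cmod (a k))^2))"
    unfolding sqnorm_cinner[symmetric] of_real_diff of_real_sum
    by (simp only: cnj_mult_self mult.commute)
  finally have "sqnorm n (\<lambda>i. y i - g i) = sqnorm n y - (\<Sum>k\<in>K. (cmod (a k))^2)"
    using of_real_eq_iff by blast
  then show ?thesis using sqnorm_nonneg[of n "\<lambda>i. y i - g i"] unfolding a_def by simp
qed

lemma sum_square_le_card_sum_squares: fixes a :: "nat \<Rightarrow> real" assumes "finite A"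
  shows "(\<Sum>k\<in>A. a k)^2 \<le> real (card A) * (\<Sum>k\<in>A. (a k)^2)"
proof -
  have "(\<Sum>k\<in>A. a k)^2 = (\<Sum>i\<in>A. \<Sum>j\<in>A. a i * a j)"
    by (simp add: power2_eq_square sum_product)
  also have "\<dots> \<le> (\<Sum>i\<in>A. \<Sum>j\<in>A. ((a i)^2 + (a j)^2) / 2)"
  proof (intro sum_mono)
    fix i j
    have "0 \<le> (a i - a j)^2" by simp
    then show "a i * a j \<le> ((a i)^2 + (a j)^2) / 2" by (simp add: power2_eq_square algebra_simps)
  qed
  also have "\<dots> = (\<Sum>i\<in>A. \<Sum>j\<in>A. (a i)^2 / 2) + (\<Sum>i\<in>A. \<Sum>j\<in>A. (a j)^2 / 2)"
    by (simp only: add_divide_distrib sum.distrib)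
  also have "(\<Sum>i\<in>A. \<Sum>j\<in>A. (a j)^2 / 2) = (\<Sum>i\<in>A. \<Sum>j\<in>A. (a i)^2 / 2)"
    by (rule sum.swap)
  also have "(\<Sum>i\<in>A. \<Sum>j\<in>A. (a i)^2 / 2) + (\<Sum>i\<in>A. \<Sum>j\<in>A. (a i)^2 / 2) = real (card A) * (\<Sum>k\<in>A. (a k)^2)"
    by (simp add: sum_distrib_left[symmetric] sum_divide_distrib[symmetric])
  finally show ?thesis .
qed

section \<open>Operators with a given orthonormal eigenbasis\<close>

definition eig_op :: "nat \<Rightarrow> complex mat \<Rightarrow> (nat \<Rightarrow> real) \<Rightarrow> complex mat" where
  "eig_op n U d = U * real_diag_mat n d * mat_adjoint U"

definition indic :: "nat set \<Rightarrow> nat \<Rightarrow> real" where "indic T i = (if i \<in> T then 1 else 0)"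

lemma eig_op_dims[simp]: "dim_row (eig_op n U d) = dim_row U" "dim_col (eig_op n U d) = dim_row U"
  unfolding eig_op_def by simp_all

lemma eig_op_carrier[simp]: "U \<in> carrier_mat n n \<Longrightarrow> eig_op n U d \<in> carrier_mat n n"
  unfolding eig_op_def by (metis adj_carrier mult_carrier_mat real_diag_carrier)

lemma eig_op_index: "U \<in> carrier_mat n n \<Longrightarrow> i<n \<Longrightarrow> j<n \<Longrightarrow>
   eig_op n U d $$ (i,j) = (\<Sum>k<n. U$$(i,k) * d k * cnj (U$$(j,k)))"
  unfolding eig_op_def by (subst mult_entry[of _ n n _ n]) (auto simp: mult_diag_right intro!: sum.cong)

lemma eig_op_cong: assumes "U \<in> carrier_mat n n" "\<And>i. i < n \<Longrightarrow> d i = e i"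
  shows "eig_op n U d = eig_op n U e"
proof (rule eq_matI)
  fix i j assume "i < dim_row (eig_op n U e)" "j < dim_col (eig_op n U e)"
  then have i: "i < n" and j: "j < n" using assms(1) by auto
  show "eig_op n U d $$ (i,j) = eig_op n U e $$ (i,j)"
    unfolding eig_op_index[OF assms(1) i j] by (rule sum.cong) (use assms(2) in auto)
qed (use assms(1) in auto)

lemma eig_op_add: assumes "U \<in> carrier_mat n n"
  shows "eig_op n U d + eig_op n U e = eig_op n U (\<lambda>i. d i + e i)"
proof (rule eq_matI)
  fix i j assume "i < dim_row (eig_op n U (\<lambda>i. d i + e i))" "j < dim_col (eig_op n U (\<lambda>i. d i + e i))"
  then have i: "i < n" and j: "j < n" using assms(1) by auto
  have "(eig_op n U d + eig_op n U e) $$ (i,j) = eig_op n U d $$ (i,j) + eig_op n U e $$ (i,j)"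
    using i j assms by (intro index_add_mat(1)) auto
  also have "\<dots> = eig_op n U (\<lambda>i. d i + e i) $$ (i,j)"
    unfolding eig_op_index[OF assms(1) i j] sum.distrib[symmetric]
    by (rule sum.cong) (simp_all add: distrib_left distrib_right)
  finally show "(eig_op n U d + eig_op n U e) $$ (i,j) = eig_op n U (\<lambda>i. d i + e i) $$ (i,j)" .
qed (use assms(1) in auto)

lemma smult_eig_op: assumes "U \<in> carrier_mat n n"
  shows "complex_of_real c \<cdot>\<^sub>m eig_op n U d = eig_op n U (\<lambda>i. c * d i)"
proof (rule eq_matI)
  fix i j assume "i < dim_row (eig_op n U (\<lambda>i. c * d i))" "j < dim_col (eig_op n U (\<lambda>i. c * d i))"
  then have i: "i < n" and j: "j < n" using assms by auto
  show "(complex_of_real c \<cdot>\<^sub>m eig_op n U d) $$ (i,j) = eig_op n U (\<lambda>i. c * d i) $$ (i,j)"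
    using i j assms by (simp add: eig_op_index sum_distrib_left mult_ac)
qed (use assms in auto)

lemma eig_op_zero: assumes "U \<in> carrier_mat n n" shows "eig_op n U (\<lambda>_. 0) = 0\<^sub>m n n"
proof (rule eq_matI)
  fix i j assume "i < dim_row (0\<^sub>m n n :: complex mat)" "j < dim_col (0\<^sub>m n n :: complex mat)"
  then have i: "i < n" and j: "j < n" by auto
  show "eig_op n U (\<lambda>_. 0) $$ (i,j) = 0\<^sub>m n n $$ (i,j)"
    unfolding eig_op_index[OF assms(1) i j] using i j by simp
qed (use assms(1) in auto)

lemma eig_op_one: assumes "unitary_mat n U" shows "eig_op n U (\<lambda>_. 1) = 1\<^sub>m n"
proof -
  have U: "U \<in> carrier_mat n n" using unitaryD[OF assms] by simp
  have "real_diag_mat n (\<lambda>_. 1) = 1\<^sub>m n" by (rule eq_matI) auto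
  then have "eig_op n U (\<lambda>_. 1) = U * 1\<^sub>m n * mat_adjoint U" unfolding eig_op_def by simp
  also have "\<dots> = U * mat_adjoint U" using U by simp
  also have "\<dots> = 1\<^sub>m n" by (rule unitaryD(3)[OF assms])
  finally show ?thesis .
qed

lemma adj_real_diag[simp]: "mat_adjoint (real_diag_mat n d) = real_diag_mat n d"
proof (rule eq_matI)
  fix i j assume "i < dim_row (real_diag_mat n d)" "j < dim_col (real_diag_mat n d)"
  then show "mat_adjoint (real_diag_mat n d) $$ (i,j) = real_diag_mat n d $$ (i,j)"
    by (subst adj_index) auto
qed auto

lemma adj_eig_op: assumes "U \<in> carrier_mat n n" shows "mat_adjoint (eig_op n U d) = eig_op n U d"
  unfolding eig_op_def using assms
  by (simp add: adj_mult[of _ n n _ n] assoc_mult_mat[of _ n n _ n _ n])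

lemma eig_op_herm: "U \<in> carrier_mat n n \<Longrightarrow> hermitian_mat n (eig_op n U d)"
  unfolding hermitian_mat_def using adj_eig_op by simp

lemma eig_op_diff_herm: assumes "U \<in> carrier_mat n n" "W \<in> carrier_mat n n"
  shows "hermitian_mat n (eig_op n U d - eig_op n W e)"
  unfolding hermitian_mat_def
proof
  show "eig_op n U d - eig_op n W e \<in> carrier_mat n n" using assms by (simp add: minus_carrier_mat)
  show "mat_adjoint (eig_op n U d - eig_op n W e) = eig_op n U d - eig_op n W e"
    by (simp only: adj_minus[OF eig_op_carrier[OF assms(1)] eig_op_carrier[OF assms(2)]]
        adj_eig_op[OF assms(1)] adj_eig_op[OF assms(2)])
qed

lemma eig_op_mult: assumes "unitary_mat n U"
  shows "eig_op n U d * eig_op n U e = eig_op n U (\<lambda>i. d i * e i)"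
proof -
  have U: "U \<in> carrier_mat n n" using unitaryD[OF assms] by simp
  have dd: "real_diag_mat n d * real_diag_mat n e = real_diag_mat n (\<lambda>i. d i * e i)"
    by (rule eq_matI) (auto simp: mult_diag_right[of _ n n])
  have "eig_op n U d * eig_op n U e
      = U * (real_diag_mat n d * (mat_adjoint U * U) * real_diag_mat n e) * mat_adjoint U"
    unfolding eig_op_def using U by (simp add: assoc_mult_mat[of _ n n _ n _ n])
  also have "\<dots> = eig_op n U (\<lambda>i. d i * e i)"
    unfolding unitaryD(2)[OF assms] eig_op_def dd[symmetric] using U
    by (simp add: assoc_mult_mat[of _ n n _ n _ n])
  finally show ?thesis .
qed

lemma mulv_mult: assumes "A \<in> carrier_mat n n" "B \<in> carrier_mat n n" "i < n"
  shows "mulv n (A * B) x i = mulv n A (mulv n B x) i"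
proof -
  have "mulv n (A * B) x i = (\<Sum>j<n. \<Sum>k<n. A$$(i,k) * B$$(k,j) * x j)"
    unfolding mulv_def using assms
    by (intro sum.cong refl) (simp add: mult_entry[of _ n n _ n] sum_distrib_right)
  also have "\<dots> = mulv n A (mulv n B x) i"
    unfolding mulv_def by (subst sum.swap) (simp add: sum_distrib_left mult_ac)
  finally show ?thesis .
qed

lemma mulv_minus: assumes "A \<in> carrier_mat n n" "B \<in> carrier_mat n n" "i < n"
  shows "mulv n (A - B) x i = mulv n A x i - mulv n B x i"
  unfolding mulv_def using assms by (simp add: sum_subtractf left_diff_distrib)

lemma mulv_herm: assumes "hermitian_mat n P"
  shows "cinner n x (mulv n P y) = cinner n (mulv n P x) y"
proof -
  have "cinner n x (mulv n P y) = (\<Sum>j<n. \<Sum>i<n. cnj (x i) * P$$(i,j) * y j)"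
    unfolding cinner_def mulv_def by (subst sum.swap) (simp add: sum_distrib_left mult_ac)
  also have "\<dots> = cinner n (mulv n P x) y"
    unfolding cinner_def mulv_def
  proof (intro sum.cong refl)
    fix j assume "j \<in> {..<n}"
    then have "(\<Sum>i<n. cnj (x i) * P$$(i,j) * y j) = (\<Sum>i<n. cnj (P$$(j,i) * x i)) * y j"
      by (subst sum_distrib_right, intro sum.cong refl) (simp add: hermitianD[OF assms, of _ j])
    then show "(\<Sum>i<n. cnj (x i) * P$$(i,j) * y j) = cnj (\<Sum>i<n. P$$(j,i) * x i) * y j"
      by (simp add: cnj_sum)
  qed
  finally show ?thesis .
qed

lemma mulv_eig_op: assumes "U \<in> carrier_mat n n" "i < n"
  shows "mulv n (eig_op n U d) x i = (\<Sum>k<n. U$$(i,k) * d k * cinner n (colv U k) x)"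
proof -
  have "mulv n (eig_op n U d) x i = (\<Sum>j<n. \<Sum>k<n. U$$(i,k) * d k * cnj (U$$(j,k)) * x j)"
    unfolding mulv_def using assms by (simp add: eig_op_index sum_distrib_right)
  also have "\<dots> = (\<Sum>k<n. U$$(i,k) * d k * cinner n (colv U k) x)"
    unfolding cinner_def colv_def by (subst sum.swap) (simp add: sum_distrib_left algebra_simps)
  finally show ?thesis .
qed

lemma mulv_eig_op_col: assumes "unitary_mat n U" "k < n" "i < n"
  shows "mulv n (eig_op n U d) (colv U k) i = d k * colv U k i"
proof -
  have U: "U \<in> carrier_mat n n" using unitaryD[OF assms(1)] by simp
  have "mulv n (eig_op n U d) (colv U k) i = (\<Sum>m<n. U$$(i,m) * d m * (if m = k then 1 else 0))"
    unfolding mulv_eig_op[OF U assms(3)]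
    by (intro sum.cong refl) (simp add: unitary_cols[OF assms(1)] assms(2))
  also have "\<dots> = d k * colv U k i" using assms(2) by (subst sum_kronecker_right) (auto simp: colv_def)
  finally show ?thesis .
qed

lemma cinner_col_eig_op: assumes "unitary_mat n U" "j < n"
  shows "cinner n (colv U j) (mulv n (eig_op n U e) x) = e j * cinner n (colv U j) x"
proof -
  have U: "U \<in> carrier_mat n n" using unitaryD[OF assms(1)] by simp
  have "cinner n (colv U j) (mulv n (eig_op n U e) x) = cinner n (mulv n (eig_op n U e) (colv U j)) x"
    by (rule mulv_herm[OF eig_op_herm[OF U]])
  also have "\<dots> = cinner n (\<lambda>i. complex_of_real (e j) * colv U j i) x"
    by (rule cinner_cong_left) (rule mulv_eig_op_col[OF assms])
  finally show ?thesis by (simp add: cinner_scale_left)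
qed

lemma cinner_eig_op_cols: assumes "unitary_mat n U" "k < n" "l < n"
  shows "cinner n (colv U l) (mulv n (eig_op n U d) (colv U k)) = (if l = k then complex_of_real (d k) else 0)"
  using cinner_col_eig_op[OF assms(1,3)] unitary_cols[OF assms(1,3,2)] by simp

lemma qf_eig_op: assumes U: "U \<in> carrier_mat n n"
  shows "cinner n x (mulv n (eig_op n U d) x) = (\<Sum>k<n. d k * (cinner n (colv U k) x * cnj (cinner n (colv U k) x)))"
proof -
  have cn: "cnj (cinner n (colv U k) x) = (\<Sum>i<n. U$$(i,k) * cnj (x i))" for k
    unfolding cinner_def colv_def cnj_sum by (simp add: mult.commute)
  have "cinner n x (mulv n (eig_op n U d) x) = (\<Sum>i<n. \<Sum>k<n. d k * cinner n (colv U k) x * (U$$(i,k) * cnj (x i)))"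
    unfolding cinner_def[of n x] by (intro sum.cong refl) (simp add: mulv_eig_op[OF U] sum_distrib_left mult_ac)
  also have "\<dots> = (\<Sum>k<n. d k * cinner n (colv U k) x * (\<Sum>i<n. U$$(i,k) * cnj (x i)))"
    by (subst sum.swap) (simp add: sum_distrib_left)
  also have "\<dots> = (\<Sum>k<n. d k * (cinner n (colv U k) x * cnj (cinner n (colv U k) x)))"
    by (intro sum.cong refl) (simp add: cn mult_ac)
  finally show ?thesis .
qed

definition proj_weight :: "nat \<Rightarrow> complex mat \<Rightarrow> nat set \<Rightarrow> (nat \<Rightarrow> complex) \<Rightarrow> real" where
  "proj_weight n Z T u = (\<Sum>m<n. indic T m * (cmod (cinner n (colv Z m) u))^2)"

lemma proj_weight_qf: assumes Z: "Z \<in> carrier_mat n n"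
  shows "cinner n u (mulv n (eig_op n Z (indic T)) u) = complex_of_real (proj_weight n Z T u)"
  unfolding proj_weight_def qf_eig_op[OF Z] of_real_sum
  by (rule sum.cong[OF refl]) (simp only: of_real_mult cnj_mult_self mult.commute)

lemma proj_weight_bounds: assumes Z: "unitary_mat n Z"
  shows "0 \<le> proj_weight n Z T u" "proj_weight n Z T u \<le> sqnorm n u"
proof -
  show "0 \<le> proj_weight n Z T u" unfolding proj_weight_def by (rule sum_nonneg) (simp add: indic_def)
  have "proj_weight n Z T u \<le> (\<Sum>m<n. (cmod (cinner n (colv Z m) u))^2)"
    unfolding proj_weight_def by (rule sum_mono) (simp add: indic_def)
  also have "\<dots> = sqnorm n u" by (rule parseval[OF Z])
  finally show "proj_weight n Z T u \<le> sqnorm n u" .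
qed

lemma proj_weight_compl: assumes Z: "unitary_mat n Z"
  shows "proj_weight n Z ({..<n} - T) u = sqnorm n u - proj_weight n Z T u"
proof -
  have "proj_weight n Z ({..<n} - T) u + proj_weight n Z T u = (\<Sum>m<n. (cmod (cinner n (colv Z m) u))^2)"
    unfolding proj_weight_def sum.distrib[symmetric] by (rule sum.cong[OF refl]) (auto simp: indic_def)
  then show ?thesis using parseval[OF Z] by simp
qed

lemma indic_idem: "indic T i * indic T i = indic T i"
  unfolding indic_def by simp

lemma proj_idem: assumes "unitary_mat n U" "i < n"
  shows "mulv n (eig_op n U (indic T)) (mulv n (eig_op n U (indic T)) x) i = mulv n (eig_op n U (indic T)) x i"
proof -
  have U: "U \<in> carrier_mat n n" using unitaryD[OF assms(1)] by simp
  have "mulv n (eig_op n U (indic T)) (mulv n (eig_op n U (indic T)) x) i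
      = mulv n (eig_op n U (indic T) * eig_op n U (indic T)) x i"
    using U assms(2) by (simp add: mulv_mult)
  also have "eig_op n U (indic T) * eig_op n U (indic T) = eig_op n U (indic T)"
    unfolding eig_op_mult[OF assms(1)] indic_idem ..
  finally show ?thesis .
qed

lemma ctrace_minus: assumes "A \<in> carrier_mat n n" "B \<in> carrier_mat n n"
  shows "ctrace n (A - B) = ctrace n A - ctrace n B"
  unfolding ctrace_def using assms by (simp add: sum_subtractf)

lemma ctrace_mult_eig_op: assumes M: "M \<in> carrier_mat n n" and Z: "Z \<in> carrier_mat n n"
  shows "ctrace n (M * eig_op n Z x) = (\<Sum>k<n. x k * cinner n (colv Z k) (mulv n M (colv Z k)))"
proof -
  have "ctrace n (M * eig_op n Z x) = (\<Sum>i<n. \<Sum>j<n. \<Sum>k<n. x k * (cnj (Z$$(i,k)) * (M$$(i,j) * Z$$(j,k))))"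
    unfolding ctrace_def using M Z
    by (intro sum.cong refl) (simp add: mult_entry[of _ n n _ n] eig_op_index sum_distrib_left mult_ac)
  also have "\<dots> = (\<Sum>k<n. \<Sum>i<n. \<Sum>j<n. x k * (cnj (Z$$(i,k)) * (M$$(i,j) * Z$$(j,k))))"
    by (subst sum.swap, rule sum.cong[OF refl], subst sum.swap) simp
  also have "\<dots> = (\<Sum>k<n. x k * cinner n (colv Z k) (mulv n M (colv Z k)))"
    unfolding cinner_def mulv_def colv_def by (simp add: sum_distrib_left)
  finally show ?thesis .
qed

lemma ctrace_eig_op: assumes "unitary_mat n Z" shows "ctrace n (eig_op n Z x) = (\<Sum>k<n. complex_of_real (x k))"
proof -
  have Z: "Z \<in> carrier_mat n n" using unitaryD[OF assms] by simp
  have "ctrace n (eig_op n Z x) = ctrace n (eig_op n Z (\<lambda>_. 1) * eig_op n Z x)"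
    using Z by (simp add: eig_op_one[OF assms])
  also have "\<dots> = (\<Sum>k<n. complex_of_real (x k))"
    unfolding ctrace_mult_eig_op[OF eig_op_carrier[OF Z] Z]
    by (intro sum.cong refl) (simp add: cinner_eig_op_cols[OF assms] unitary_cols[OF assms])
  finally show ?thesis .
qed

lemma ctrace_proj_eig_op: assumes Z: "unitary_mat n Z" and U: "unitary_mat n U"
  shows "ctrace n (eig_op n Z (indic T) * eig_op n U d) = complex_of_real (\<Sum>k<n. d k * proj_weight n Z T (colv U k))"
proof -
  have Zc: "Z \<in> carrier_mat n n" and Uc: "U \<in> carrier_mat n n" using Z U unitaryD by auto
  show ?thesis unfolding ctrace_mult_eig_op[OF eig_op_carrier[OF Zc] Uc] proj_weight_qf[OF Zc] by simp
qed

lemma sum_indic: assumes "S \<subseteq> {..<n}"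
  shows "(\<Sum>k<n. indic S k * f k) = (\<Sum>k\<in>S. f k)"
  by (rule sum.mono_neutral_cong_right) (use assms in \<open>auto simp: indic_def\<close>)

lemma proots_linear_prod: "proots (\<Prod>a\<leftarrow>as. [:- a, 1:]) = mset (as :: complex list)"
proof (induction as)
  case (Cons a as)
  have nz: "\<And>a::complex. [:- a, 1:] \<noteq> 0" by simp
  have "(\<Prod>a\<leftarrow>as. [:- a, 1:]) \<noteq> 0" using nz by (auto simp: prod_list_zero_iff)
  then have "proots (\<Prod>a\<leftarrow>a # as. [:- a, 1:]) = proots [:- a, 1:] + proots (\<Prod>a\<leftarrow>as. [:- a, 1:])"
    using proots_mult[OF nz[of a]] by simp
  also have "proots [:- a, 1:] = {#a#}" using proots_linear_factor[of "-a"] by simp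
  finally show ?case using Cons by simp
qed simp

lemma char_poly_eig_op: assumes "unitary_mat n U"
  shows "char_poly (eig_op n U d) = (\<Prod>a\<leftarrow>map (\<lambda>i. complex_of_real (d i)) [0..<n]. [:- a, 1:])"
proof -
  have U: "U \<in> carrier_mat n n" using unitaryD[OF assms] by simp
  have "similar_mat_wit (eig_op n U d) (real_diag_mat n d) U (mat_adjoint U)"
    unfolding similar_mat_wit_def Let_def using U unitaryD[OF assms] by (simp add: eig_op_def)
  then have "char_poly (eig_op n U d) = char_poly (real_diag_mat n d)"
    by (intro char_poly_similar) (auto simp: similar_mat_def)
  also have "\<dots> = (\<Prod>a\<leftarrow>diag_mat (real_diag_mat n d). [:- a, 1:])"
    by (rule char_poly_upper_triangular[of _ n]) (auto simp: upper_triangular_def)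
  also have "diag_mat (real_diag_mat n d) = map (\<lambda>i. complex_of_real (d i)) [0..<n]"
    unfolding diag_mat_def by simp
  finally show ?thesis .
qed

lemma proots_eig_op: assumes "unitary_mat n U"
  shows "proots (char_poly (eig_op n U d)) = mset (map (\<lambda>i. complex_of_real (d i)) [0..<n])"
  unfolding char_poly_eig_op[OF assms] by (rule proots_linear_prod)

lemma eig_count_eig_op: assumes "unitary_mat n U"
  shows "eig_count (eig_op n U d) S = card {i. i < n \<and> d i \<in> S}"
proof -
  have "eig_count (eig_op n U d) S = length (filter (\<lambda>i. d i \<in> S) [0..<n])"
    unfolding eig_count_def proots_eig_op[OF assms] mset_filter[symmetric] size_mset
    by (simp add: filter_map comp_def)
  also have "\<dots> = card {i. i < n \<and> d i \<in> S}"
    unfolding length_filter_conv_card by (intro arg_cong[where f=card]) auto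
  finally show ?thesis .
qed

lemma sum_mset_upt: "(\<Sum>z\<in># mset (map f [0..<n]). g z) = (\<Sum>i<n. g (f i))"
  by (induction n) (auto simp: add.commute)

lemma trace_norm_eig_op: assumes "unitary_mat n U"
  shows "trace_norm (eig_op n U d) = (\<Sum>i<n. \<bar>d i\<bar>)"
proof -
  have U: "U \<in> carrier_mat n n" using unitaryD[OF assms] by simp
  have "mat_adjoint (eig_op n U d) * eig_op n U d = eig_op n U (\<lambda>i. d i * d i)"
    using adj_eig_op[OF U] eig_op_mult[OF assms] by simp
  then have "trace_norm (eig_op n U d) = (\<Sum>z\<in># mset (map (\<lambda>i. complex_of_real (d i * d i)) [0..<n]). sqrt (Re z))"
    unfolding trace_norm_def by (simp only: proots_eig_op[OF assms])
  also have "\<dots> = (\<Sum>i<n. sqrt (d i * d i))"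
    unfolding sum_mset_upt by simp
  also have "\<dots> = (\<Sum>i<n. \<bar>d i\<bar>)" by (simp add: real_sqrt_mult)
  finally show ?thesis .
qed

lemma rank_eig_op_le: assumes "finite T" "U \<in> carrier_mat n n"
  shows "vec_space.rank n (eig_op n U (indic T)) \<le> card T"
  using assms(1)
proof (induction T rule: finite_induct)
  case empty
  have "eig_op n U (indic {}) = 0\<^sub>m n n" using eig_op_zero[OF assms(2)] unfolding indic_def by simp
  then show ?case using vec_space.rank_0I by simp
next
  case (insert j T)
  have split: "eig_op n U (indic (insert j T)) = eig_op n U (indic T) + eig_op n U (indic {j})"
    unfolding eig_op_add[OF assms(2)] using insert(2)
    by (intro arg_cong[where f="eig_op n U"]) (auto simp: indic_def)
  have "vec_space.rank n (eig_op n U (indic {j})) \<le> 1"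
  proof (rule vec_space.rank_le_1_product_entries[of _ n n "\<lambda>r. if j < n then U$$(r,j) else 0" "\<lambda>c. cnj (U$$(c,j))"])
    fix r c assume "r < dim_row (eig_op n U (indic {j}))" "c < dim_col (eig_op n U (indic {j}))"
    then have r: "r < n" and c: "c < n" using assms(2) by auto
    have "eig_op n U (indic {j}) $$ (r,c) = (\<Sum>k<n. if k = j then U$$(r,k) * cnj (U$$(c,k)) else 0)"
      unfolding eig_op_index[OF assms(2) r c] by (rule sum.cong) (auto simp: indic_def)
    then show "eig_op n U (indic {j}) $$ (r,c) = (if j < n then U$$(r,j) else 0) * cnj (U$$(c,j))"
      by (subst (asm) sum.delta) auto
  qed (use assms(2) in simp)
  moreover have "vec_space.rank n (eig_op n U (indic (insert j T)))
      \<le> vec_space.rank n (eig_op n U (indic T)) + vec_space.rank n (eig_op n U (indic {j}))"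
    unfolding split by (rule vec_space.rank_subadditive[of _ n n]) (use assms(2) in auto)
  ultimately show ?case using insert by simp
qed

text \<open>The rank of a spectral projector is the number of selected eigenvectors: the two
  complementary projectors sum to the identity, so their ranks cannot both be deficient.\<close>
lemma rank_eig_op: assumes "unitary_mat n U" "T \<subseteq> {..<n}"
  shows "vec_space.rank n (eig_op n U (indic T)) = card T"
proof -
  have U: "U \<in> carrier_mat n n" using unitaryD[OF assms(1)] by simp
  have fT: "finite T" using assms(2) finite_subset by blast
  define T' where "T' = {..<n} - T"
  have cT': "card T' = n - card T" unfolding T'_def using assms(2) by (simp add: card_Diff_subset fT)
  have "eig_op n U (indic T) + eig_op n U (indic T') = eig_op n U (\<lambda>_. 1)"
    unfolding eig_op_add[OF U] by (rule eig_op_cong[OF U]) (auto simp: indic_def T'_def)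
  then have sum1: "eig_op n U (indic T) + eig_op n U (indic T') = 1\<^sub>m n" by (simp add: eig_op_one[OF assms(1)])
  have "vec_space.rank n (1\<^sub>m n :: complex mat) = n"
    using vec_space.det_rank_iff[of "1\<^sub>m n :: complex mat" n] by simp
  then have "n \<le> vec_space.rank n (eig_op n U (indic T)) + vec_space.rank n (eig_op n U (indic T'))"
    using vec_space.rank_subadditive[of "eig_op n U (indic T)" n n "eig_op n U (indic T')"] U sum1 by simp
  moreover have "card T \<le> n" using card_mono[OF _ assms(2)] by simp
  moreover have "vec_space.rank n (eig_op n U (indic T')) \<le> card T'"
    by (rule rank_eig_op_le) (use U in \<open>auto simp: T'_def\<close>)
  moreover have "vec_space.rank n (eig_op n U (indic T)) \<le> card T" by (rule rank_eig_op_le[OF fT U])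
  ultimately show ?thesis using cT' by linarith
qed

section \<open>The spectral theorem for Hermitian matrices\<close>

lemma cscalar_sum: "v \<in> carrier_vec n \<Longrightarrow> w \<in> carrier_vec n \<Longrightarrow> v \<bullet>c w = (\<Sum>i<n. v$i * cnj (w$i))"
  unfolding scalar_prod_def by (rule sum.cong) (auto simp: lessThan_atLeast0)

lemma unitary_normalized_cols:
  fixes ws :: "complex vec list"
  assumes ws: "set ws \<subseteq> carrier_vec n" "corthogonal ws" "length ws = n"
  shows "\<exists>N :: nat \<Rightarrow> real. unitary_mat n (mat n n (\<lambda>(i,j). ws!j $ i / N j))"
proof -
  define N where "N j = sqrt (\<Sum>i<n. (cmod (ws!j $ i))^2)" for j
  define W where "W = mat n n (\<lambda>(i,j). ws!j $ i / N j)"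
  have wsc: "ws ! j \<in> carrier_vec n" if "j < n" for j using ws that by auto
  have self: "ws!j \<bullet>c ws!j = complex_of_real ((N j)^2)" if "j<n" for j
  proof -
    have "ws!j \<bullet>c ws!j = (\<Sum>i<n. ws!j$i * cnj (ws!j$i))" using cscalar_sum wsc that by blast
    also have "\<dots> = complex_of_real (\<Sum>i<n. (cmod (ws!j $ i))^2)"
      unfolding of_real_sum by (rule sum.cong[OF refl]) (simp only: cnj_mult_self mult.commute)
    finally show ?thesis unfolding N_def by (simp add: sum_nonneg)
  qed
  have Npos: "N j > 0" if "j<n" for j
  proof -
    have "ws!j \<bullet>c ws!j \<noteq> 0" using ws(2) ws(3) that unfolding corthogonal_def by auto
    then have "N j \<noteq> 0" using self[OF that] by auto
    moreover have "N j \<ge> 0" unfolding N_def by (simp add: sum_nonneg)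
    ultimately show ?thesis by simp
  qed
  have "mat_adjoint W * W = 1\<^sub>m n"
  proof (rule eq_matI)
    fix k l assume "k < dim_row (1\<^sub>m n)" "l < dim_col (1\<^sub>m n)"
    then have k: "k < n" and l: "l < n" by auto
    have "(mat_adjoint W * W) $$ (k,l) = (\<Sum>i<n. cnj (ws!k $ i / N k) * (ws!l $ i / N l))"
      using k l by (subst mult_entry[of _ n n _ n]) (auto simp: W_def intro!: sum.cong)
    also have "\<dots> = (\<Sum>i<n. ws!l $ i * cnj (ws!k $ i)) / (N k * N l)"
      by (simp add: sum_divide_distrib mult_ac)
    also have "\<dots> = (ws!l \<bullet>c ws!k) / (N k * N l)"
      using cscalar_sum[OF wsc[OF l] wsc[OF k]] by simp
    also have "\<dots> = 1\<^sub>m n $$ (k,l)"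
    proof (cases "k = l")
      case True
      then show ?thesis using self[OF k] Npos[OF k] k by (simp add: power2_eq_square)
    next
      case False
      then have "ws!l \<bullet>c ws!k = 0" using ws(2,3) k l unfolding corthogonal_def by auto
      then show ?thesis using False k l by simp
    qed
    finally show "(mat_adjoint W * W) $$ (k,l) = 1\<^sub>m n $$ (k,l)" .
  qed (auto simp: W_def)
  then have "unitary_mat n W" unfolding unitary_mat_def by (simp add: W_def)
  then show ?thesis unfolding W_def by blast
qed

lemma unitary_completion:
  fixes v :: "complex vec"
  assumes v: "v \<in> carrier_vec n" and v0: "v \<noteq> 0\<^sub>v n"
  shows "\<exists>W c. unitary_mat n W \<and> (\<forall>i<n. W$$(i,0) = c * v$i)"
proof -
  interpret cof_vec_space n "TYPE(complex)" .
  define b where "b = basis_completion v"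
  define ws where "ws = gram_schmidt n b"
  have b: "set b \<subseteq> carrier_vec n" "distinct b" "\<not> lin_dep (set b)" "length b = n" "hd b = v"
    using basis_completion[OF v v0] unfolding b_def by auto
  have ws: "set ws \<subseteq> carrier_vec n" "corthogonal ws" "length ws = n"
    using gram_schmidt_result[OF b(1-3) ws_def] b(4) by auto
  have n0: "n \<noteq> 0" using v v0 by (metis carrier_vecD eq_vecI index_zero_vec(2) less_nat_zero_code)
  then obtain vs where bv: "b = v # vs" using b(4,5) by (cases b) auto
  have "hd ws = v" unfolding ws_def bv using gram_schmidt_hd[OF v] by simp
  then have ws0: "ws ! 0 = v" using n0 ws(3) by (cases ws) auto
  obtain N :: "nat \<Rightarrow> real" where W: "unitary_mat n (mat n n (\<lambda>(i,j). ws!j $ i / N j))"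
    using unitary_normalized_cols[OF ws] by blast
  define W where "W = mat n n (\<lambda>(i,j). ws!j $ i / N j)"
  show ?thesis
  proof (intro exI conjI)
    show "unitary_mat n W" using W unfolding W_def .
    show "\<forall>i<n. W $$ (i,0) = complex_of_real (1 / N 0) * v$i"
      using n0 ws0 unfolding W_def by auto
  qed
qed

definition block_one :: "nat \<Rightarrow> complex mat \<Rightarrow> complex mat" where
  "block_one m U = mat (Suc m) (Suc m)
     (\<lambda>(i,j). if i = 0 \<and> j = 0 then 1 else if i = 0 \<or> j = 0 then 0 else U$$(i-1,j-1))"

lemma block_one_dims[simp]: "dim_row (block_one m U) = Suc m" "dim_col (block_one m U) = Suc m"
  unfolding block_one_def by simp_all

lemma block_one_carrier[simp]: "block_one m U \<in> carrier_mat (Suc m) (Suc m)"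
  unfolding carrier_mat_def by simp

lemma block_one_index[simp]:
  "block_one m U $$ (0,0) = 1"
  "k < m \<Longrightarrow> block_one m U $$ (0, Suc k) = 0"
  "k < m \<Longrightarrow> block_one m U $$ (Suc k, 0) = 0"
  "k < m \<Longrightarrow> l < m \<Longrightarrow> block_one m U $$ (Suc k, Suc l) = U $$ (k,l)"
  unfolding block_one_def by simp_all

lemma unitary_block_one: assumes U: "unitary_mat m U" shows "unitary_mat (Suc m) (block_one m U)"
proof -
  have "mat_adjoint (block_one m U) * block_one m U = 1\<^sub>m (Suc m)"
  proof (rule eq_matI)
    fix i j assume "i < dim_row (1\<^sub>m (Suc m))" "j < dim_col (1\<^sub>m (Suc m))"
    then have i: "i < Suc m" and j: "j < Suc m" by auto
    have "(mat_adjoint (block_one m U) * block_one m U) $$ (i,j)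
        = (\<Sum>k<Suc m. cnj (block_one m U $$ (k,i)) * block_one m U $$ (k,j))"
      using i j by (subst mult_entry[of _ "Suc m" "Suc m" _ "Suc m"]) (auto simp del: sum.lessThan_Suc intro!: sum.cong)
    also have "\<dots> = cnj (block_one m U $$ (0,i)) * block_one m U $$ (0,j)
          + (\<Sum>k<m. cnj (block_one m U $$ (Suc k,i)) * block_one m U $$ (Suc k,j))"
      by (rule sum.lessThan_Suc_shift)
    also have "\<dots> = 1\<^sub>m (Suc m) $$ (i,j)"
    proof (cases i; cases j)
      fix i' j' assume ij: "i = Suc i'" "j = Suc j'"
      have "(\<Sum>k<m. cnj (block_one m U $$ (Suc k,i)) * block_one m U $$ (Suc k,j)) = cinner m (colv U i') (colv U j')"
        unfolding cinner_def colv_def using i j ij by (intro sum.cong) auto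
      then show ?thesis using unitary_cols[OF U, of i' j'] i j ij by auto
    qed (use i j in auto)
    finally show "(mat_adjoint (block_one m U) * block_one m U) $$ (i,j) = 1\<^sub>m (Suc m) $$ (i,j)" .
  qed auto
  then show ?thesis unfolding unitary_mat_def by simp
qed

lemma eig_op_block_one:
  assumes A: "A \<in> carrier_mat (Suc m) (Suc m)" and U3: "U3 \<in> carrier_mat m m"
    and col0: "\<And>i. i < Suc m \<Longrightarrow> A $$ (i,0) = (if i = 0 then complex_of_real r else 0)"
    and row0: "\<And>j. j < Suc m \<Longrightarrow> A $$ (0,j) = (if j = 0 then complex_of_real r else 0)"
    and A3: "\<And>i j. i < m \<Longrightarrow> j < m \<Longrightarrow> A $$ (Suc i, Suc j) = eig_op m U3 d3 $$ (i,j)"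
  shows "eig_op (Suc m) (block_one m U3) (\<lambda>i. if i = 0 then r else d3 (i - 1)) = A"
proof (rule eq_matI)
  fix i j assume "i < dim_row A" "j < dim_col A"
  then have i: "i < Suc m" and j: "j < Suc m" using A by auto
  let ?B = "block_one m U3"
  have "eig_op (Suc m) ?B (\<lambda>i. if i = 0 then r else d3 (i - 1)) $$ (i,j)
      = ?B $$ (i,0) * r * cnj (?B $$ (j,0)) + (\<Sum>k<m. ?B $$ (i,Suc k) * d3 k * cnj (?B $$ (j,Suc k)))"
    unfolding eig_op_index[OF block_one_carrier i j] by (subst sum.lessThan_Suc_shift) simp
  also have "\<dots> = A $$ (i,j)"
  proof (cases i; cases j)
    fix i' j' assume ij: "i = Suc i'" "j = Suc j'"
    have "(\<Sum>k<m. ?B $$ (i,Suc k) * d3 k * cnj (?B $$ (j,Suc k))) = eig_op m U3 d3 $$ (i',j')"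
      using i j ij by (subst eig_op_index[OF U3]) (auto intro!: sum.cong)
    then show ?thesis using A3[of i' j'] i j ij by simp
  qed (use i j col0 row0 in auto)
  finally show "eig_op (Suc m) ?B (\<lambda>i. if i = 0 then r else d3 (i - 1)) $$ (i,j) = A $$ (i,j)" .
qed (use A in auto)

lemma eig_op_unitary_conj: assumes W: "unitary_mat n W" and B: "B \<in> carrier_mat n n"
  shows "eig_op n (W * B) d = W * eig_op n B d * mat_adjoint W"
  using unitaryD(1)[OF W] B unfolding eig_op_def
  by (simp add: adj_mult[of _ n n _ n] assoc_mult_mat[of _ n n _ n _ n])

lemma deflate_eigenvector:
  assumes herm: "hermitian_mat n A" and W: "unitary_mat n W" and n0: "0 < n"
    and ev: "\<And>k. k < n \<Longrightarrow> (A * W) $$ (k,0) = e * W$$(k,0)"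
  defines "A' \<equiv> mat_adjoint W * A * W"
  shows "hermitian_mat n A'" "complex_of_real (Re e) = e"
    "\<And>i. i < n \<Longrightarrow> A' $$ (i,0) = (if i = 0 then e else 0)"
    "\<And>j. j < n \<Longrightarrow> A' $$ (0,j) = (if j = 0 then e else 0)"
proof -
  have A: "A \<in> carrier_mat n n" and adjA: "mat_adjoint A = A" using herm unfolding hermitian_mat_def by auto
  have Wc: "W \<in> carrier_mat n n" using unitaryD[OF W] by simp
  have A'c: "A' \<in> carrier_mat n n" unfolding A'_def using A Wc by (metis adj_carrier mult_carrier_mat)
  have "mat_adjoint A' = mat_adjoint W * mat_adjoint (mat_adjoint W * A)"
    unfolding A'_def by (rule adj_mult[of _ n n _ n]) (use A Wc in \<open>metis adj_carrier mult_carrier_mat\<close>, use Wc in simp)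
  also have "mat_adjoint (mat_adjoint W * A) = mat_adjoint A * W"
    by (subst adj_mult[of _ n n _ n]) (use A Wc in auto)
  finally have "mat_adjoint A' = A'" unfolding A'_def adjA using A Wc by (simp add: assoc_mult_mat[of _ n n _ n _ n])
  then show herm': "hermitian_mat n A'" unfolding hermitian_mat_def using A'c by simp
  have col0: "A' $$ (i,0) = (if i = 0 then e else 0)" if i: "i < n" for i
  proof -
    have "A' = mat_adjoint W * (A * W)" unfolding A'_def using A Wc by (simp add: assoc_mult_mat[of _ n n _ n _ n])
    then have "A' $$ (i,0) = (\<Sum>k<n. cnj (W$$(k,i)) * (e * W$$(k,0)))"
      using A Wc i n0 ev by (simp add: mult_entry[of _ n n _ n])
    also have "\<dots> = e * cinner n (colv W i) (colv W 0)"
      unfolding cinner_def colv_def by (simp add: sum_distrib_left mult_ac)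
    finally have "A' $$ (i,0) = e * cinner n (colv W i) (colv W 0)" .
    then show ?thesis using unitary_cols[OF W i n0] by simp
  qed
  have ce: "cnj e = e" using hermitianD[OF herm' n0 n0] col0[OF n0] by simp
  then show "complex_of_real (Re e) = e" by (simp add: complex_eq_iff)
  show "A' $$ (i,0) = (if i = 0 then e else 0)" if "i < n" for i using col0[OF that] .
  show "A' $$ (0,j) = (if j = 0 then e else 0)" if j: "j < n" for j
    using hermitianD[OF herm' n0 j] col0[OF j] ce by auto
qed

lemma unitary_with_eigenvector: assumes A: "A \<in> carrier_mat (Suc m) (Suc m)"
  shows "\<exists>W e. unitary_mat (Suc m) W \<and> (\<forall>k < Suc m. (A * W) $$ (k,0) = e * W$$(k,0))"
proof -
  define n where "n = Suc m"
  have A: "A \<in> carrier_mat n n" using A unfolding n_def .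
  have "degree (char_poly A) = n" using degree_monic_char_poly[OF A] by simp
  then obtain e where "poly (char_poly A) e = 0"
    using fundamental_theorem_of_algebra unfolding constant_degree n_def by fastforce
  then have "eigenvector A (find_eigenvector A e) e"
    using find_eigenvector[OF A] eigenvalue_root_char_poly[OF A] by simp
  then obtain v where v: "v \<in> carrier_vec n" "v \<noteq> 0\<^sub>v n" "A *\<^sub>v v = e \<cdot>\<^sub>v v"
    unfolding eigenvector_def using A by auto
  obtain W c where W: "unitary_mat n W" and Wv: "\<forall>i<n. W$$(i,0) = c * v$i"
    using unitary_completion[OF v(1,2)] by blast
  have Wc: "W \<in> carrier_mat n n" using unitaryD[OF W] by simp
  have "(A * W) $$ (k,0) = e * W$$(k,0)" if k: "k < n" for k
  proof -
    have "(A * W) $$ (k,0) = c * (A *\<^sub>v v) $ k"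
      using A Wc k Wv v(1)
      by (simp add: mult_entry[of _ n n _ n] index_mult_mat_vec scalar_prod_def
          sum_distrib_left lessThan_atLeast0 mult_ac)
    then show ?thesis using v(3) v(1) k Wv by simp
  qed
  then show ?thesis using W unfolding n_def by blast
qed

theorem spectral: "hermitian_mat n A \<Longrightarrow> \<exists>U d. unitary_mat n U \<and> A = eig_op n U d"
proof (induction n arbitrary: A)
  case 0
  have "unitary_mat 0 (1\<^sub>m 0)" unfolding unitary_mat_def by (auto intro!: eq_matI)
  moreover have "A = eig_op 0 (1\<^sub>m 0) (\<lambda>_. 0)" using 0 unfolding hermitian_mat_def
    by (auto intro!: eq_matI simp: eig_op_def)
  ultimately show ?case by blast
next
  case (Suc m)
  define n where "n = Suc m"
  have A: "A \<in> carrier_mat n n" and herm: "hermitian_mat n A" using Suc.prems unfolding hermitian_mat_def n_def by auto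
  obtain W e where W: "unitary_mat n W" and ev: "\<And>k. k < n \<Longrightarrow> (A * W) $$ (k,0) = e * W$$(k,0)"
    using unitary_with_eigenvector[OF A[unfolded n_def]] unfolding n_def by blast
  have Wc: "W \<in> carrier_mat n n" using unitaryD[OF W] by simp
  have n0: "0 < n" unfolding n_def by simp
  define A' where "A' = mat_adjoint W * A * W"
  note defl = deflate_eigenvector[OF herm W n0 ev, folded A'_def]
  have A'c: "A' \<in> carrier_mat n n" using defl(1) unfolding hermitian_mat_def by simp
  define A3 where "A3 = mat m m (\<lambda>(i,j). A' $$ (Suc i, Suc j))"
  have A'h: "A'$$(i,j) = cnj (A'$$(j,i))" if "i < n" "j < n" for i j
    using hermitianD[OF defl(1) that] .
  have "hermitian_mat m A3"
    unfolding hermitian_mat_def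
    by (auto intro!: eq_matI simp: A3_def n_def A'h[symmetric])
  then obtain U3 d3 where U3: "unitary_mat m U3" and A3eq: "A3 = eig_op m U3 d3"
    using Suc.IH by blast
  define B where "B = block_one m U3"
  have B: "unitary_mat n B" unfolding B_def n_def by (rule unitary_block_one[OF U3])
  have col0: "A' $$ (i,0) = (if i = 0 then complex_of_real (Re e) else 0)"
    and row0: "A' $$ (0,i) = (if i = 0 then complex_of_real (Re e) else 0)" if "i < n" for i
    using defl(2) defl(3,4) that by simp_all
  have A3: "A' $$ (Suc i, Suc j) = eig_op m U3 d3 $$ (i,j)" if "i < m" "j < m" for i j
    using that unfolding A3eq[symmetric] A3_def by simp
  have "eig_op n B (\<lambda>i. if i = 0 then Re e else d3 (i - 1)) = A'"
    unfolding B_def n_def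
    by (rule eig_op_block_one[OF A'c[unfolded n_def] unitaryD(1)[OF U3] col0[unfolded n_def]
          row0[unfolded n_def] A3])
  then have "eig_op n (W * B) (\<lambda>i. if i = 0 then Re e else d3 (i - 1)) = (W * mat_adjoint W) * A * (W * mat_adjoint W)"
    unfolding eig_op_unitary_conj[OF W unitaryD(1)[OF B]] A'_def using Wc A
    by (simp add: assoc_mult_mat[of _ n n _ n _ n])
  also have "\<dots> = A" using unitaryD(3)[OF W] A by simp
  finally have "A = eig_op n (W * B) (\<lambda>i. if i = 0 then Re e else d3 (i - 1))" by simp
  with unitary_mult[OF W B] show ?case unfolding n_def by blast
qed

section \<open>The partial trace does not increase the trace norm\<close>

definition contractive :: "nat \<Rightarrow> complex mat \<Rightarrow> bool" where
  "contractive n M \<longleftrightarrow> (\<forall>z. cmod (cinner n z (mulv n M z)) \<le> sqnorm n z)"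

lemma trace_bound: assumes Z: "unitary_mat n Z" and M: "M \<in> carrier_mat n n" and c: "contractive n M"
  shows "cmod (ctrace n (M * eig_op n Z x)) \<le> (\<Sum>k<n. \<bar>x k\<bar>)"
proof -
  have Zc: "Z \<in> carrier_mat n n" using unitaryD[OF Z] by simp
  have "cmod (ctrace n (M * eig_op n Z x)) \<le> (\<Sum>k<n. cmod (x k * cinner n (colv Z k) (mulv n M (colv Z k))))"
    unfolding ctrace_mult_eig_op[OF M Zc] by (rule norm_sum)
  also have "\<dots> \<le> (\<Sum>k<n. \<bar>x k\<bar>)"
  proof (rule sum_mono)
    fix k assume "k \<in> {..<n}"
    then have "cmod (cinner n (colv Z k) (mulv n M (colv Z k))) \<le> 1"
      using c sqnorm_col[OF Z] unfolding contractive_def by (metis lessThan_iff)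
    then show "cmod (x k * cinner n (colv Z k) (mulv n M (colv Z k))) \<le> \<bar>x k\<bar>"
      by (simp add: norm_mult mult_left_le)
  qed
  finally show ?thesis .
qed

lemma contractive_eig_op: assumes U: "unitary_mat n U" and s: "\<And>k. k < n \<Longrightarrow> \<bar>s k\<bar> \<le> 1"
  shows "contractive n (eig_op n U s)"
  unfolding contractive_def
proof
  fix z
  have Uc: "U \<in> carrier_mat n n" using unitaryD[OF U] by simp
  have "cmod (cinner n z (mulv n (eig_op n U s) z))
      \<le> (\<Sum>k<n. cmod (s k * (cinner n (colv U k) z * cnj (cinner n (colv U k) z))))"
    unfolding qf_eig_op[OF Uc] by (rule norm_sum)
  also have "\<dots> \<le> (\<Sum>k<n. (cmod (cinner n (colv U k) z))^2)"
    using s by (intro sum_mono) (simp add: norm_mult power2_eq_square mult_left_le_one_le)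
  also have "\<dots> = sqnorm n z" by (rule parseval[OF U])
  finally show "cmod (cinner n z (mulv n (eig_op n U s) z)) \<le> sqnorm n z" .
qed

lemma sum_split_prod: "(\<Sum>r<dS*(dB::nat). f r) = (\<Sum>i<dS. \<Sum>a<dB. f (i*dB + a))"
proof (induction dS)
  case (Suc k)
  have shift: "(\<Sum>r<m + l. f r) = (\<Sum>r<m. f r) + (\<Sum>a<l. f (m+a))" for m l :: nat
    by (induction l) (auto simp: add.assoc)
  have "(\<Sum>r<Suc k * dB. f r) = (\<Sum>r<k*dB. f r) + (\<Sum>a<dB. f (k*dB+a))"
    using shift[of "k*dB" dB] by (simp add: add.commute)
  then show ?case using Suc by simp
qed simp

lemma idx_lt: "i < dS \<Longrightarrow> a < dB \<Longrightarrow> i*dB + a < dS*(dB::nat)"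
proof -
  assume "i < dS" "a < dB"
  then have "i*dB + a < Suc i * dB" by simp
  also have "\<dots> \<le> dS * dB" using \<open>i < dS\<close> by (intro mult_right_mono) auto
  finally show ?thesis .
qed

text \<open>The lift M (x) 1_B of an operator on H_S to the composite space.\<close>
definition lift_S :: "nat \<Rightarrow> nat \<Rightarrow> complex mat \<Rightarrow> complex mat" where
  "lift_S dS dB M = mat (dS*dB) (dS*dB) (\<lambda>(r,c). if r mod dB = c mod dB then M$$(r div dB, c div dB) else 0)"

lemma lift_S_carrier[simp]: "lift_S dS dB M \<in> carrier_mat (dS*dB) (dS*dB)"
  unfolding lift_S_def by simp

lemma lift_S_idx: "i < dS \<Longrightarrow> a < dB \<Longrightarrow> j < dS \<Longrightarrow> b < dB \<Longrightarrow>
  lift_S dS dB M $$ (i*dB+a, j*dB+b) = (if a = b then M$$(i,j) else 0)"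
  unfolding lift_S_def using idx_lt[of i dS a dB] idx_lt[of j dS b dB] by simp

lemma pt_index: "i < dS \<Longrightarrow> j < dS \<Longrightarrow> partial_trace_B dS dB X $$ (i,j) = (\<Sum>a<dB. X $$ (i*dB + a, j*dB + a))"
  unfolding partial_trace_B_def by simp

lemma pt_carrier[simp]: "partial_trace_B dS dB X \<in> carrier_mat dS dS"
  unfolding partial_trace_B_def by simp

lemma pt_minus: assumes "A \<in> carrier_mat (dS*dB) (dS*dB)" "B \<in> carrier_mat (dS*dB) (dS*dB)"
  shows "partial_trace_B dS dB A - partial_trace_B dS dB B = partial_trace_B dS dB (A - B)"
proof (rule eq_matI)
  fix i j assume "i < dim_row (partial_trace_B dS dB (A - B))" "j < dim_col (partial_trace_B dS dB (A - B))"
  then have i: "i < dS" and j: "j < dS" by (auto simp: partial_trace_B_def)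
  have "(partial_trace_B dS dB A - partial_trace_B dS dB B) $$ (i,j)
      = partial_trace_B dS dB A $$ (i,j) - partial_trace_B dS dB B $$ (i,j)"
    using i j by (simp add: partial_trace_B_def)
  also have "\<dots> = (\<Sum>a<dB. A $$ (i*dB + a, j*dB + a) - B $$ (i*dB + a, j*dB + a))"
    using i j by (simp add: pt_index sum_subtractf)
  also have "\<dots> = partial_trace_B dS dB (A - B) $$ (i,j)"
    unfolding pt_index[OF i j] using idx_lt[OF i] idx_lt[OF j] assms by (intro sum.cong) auto
  finally show "(partial_trace_B dS dB A - partial_trace_B dS dB B) $$ (i,j) = partial_trace_B dS dB (A - B) $$ (i,j)" .
qed (auto simp: partial_trace_B_def)

lemma pt_herm: assumes "hermitian_mat (dS*dB) X" shows "hermitian_mat dS (partial_trace_B dS dB X)"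
  unfolding hermitian_mat_def
proof
  show "partial_trace_B dS dB X \<in> carrier_mat dS dS" by simp
  show "mat_adjoint (partial_trace_B dS dB X) = partial_trace_B dS dB X"
  proof (rule eq_matI)
    fix i j assume "i < dim_row (partial_trace_B dS dB X)" "j < dim_col (partial_trace_B dS dB X)"
    then have i: "i < dS" and j: "j < dS" by (auto simp: partial_trace_B_def)
    have "mat_adjoint (partial_trace_B dS dB X) $$ (i,j) = (\<Sum>a<dB. cnj (X $$ (j*dB + a, i*dB + a)))"
      using i j by (subst adj_index) (auto simp: partial_trace_B_def pt_index cnj_sum)
    also have "\<dots> = (\<Sum>a<dB. X $$ (i*dB + a, j*dB + a))"
      by (intro sum.cong refl) (simp add: hermitianD[OF assms idx_lt[OF i] idx_lt[OF j]])
    also have "\<dots> = partial_trace_B dS dB X $$ (i,j)" using i j by (simp add: pt_index)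
    finally show "mat_adjoint (partial_trace_B dS dB X) $$ (i,j) = partial_trace_B dS dB X $$ (i,j)" .
  qed (auto simp: partial_trace_B_def)
qed

lemma ctrace_pt: assumes M: "M \<in> carrier_mat dS dS" and X: "X \<in> carrier_mat (dS*dB) (dS*dB)"
  shows "ctrace dS (M * partial_trace_B dS dB X) = ctrace (dS*dB) (lift_S dS dB M * X)"
proof -
  let ?N = "dS*dB"
  have "ctrace ?N (lift_S dS dB M * X) = (\<Sum>r<?N. \<Sum>c<?N. lift_S dS dB M $$ (r,c) * X $$ (c,r))"
    unfolding ctrace_def using X by (intro sum.cong refl) (simp add: mult_entry[of _ ?N ?N _ ?N])
  also have "\<dots> = (\<Sum>i<dS. \<Sum>a<dB. \<Sum>j<dS. \<Sum>b<dB. lift_S dS dB M $$ (i*dB+a,j*dB+b) * X $$ (j*dB+b,i*dB+a))"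
    unfolding sum_split_prod ..
  also have "\<dots> = (\<Sum>i<dS. \<Sum>a<dB. \<Sum>j<dS. M$$(i,j) * X $$ (j*dB+a,i*dB+a))"
  proof (intro sum.cong refl)
    fix i a j assume "i \<in> {..<dS}" "a \<in> {..<dB}" "j \<in> {..<dS}"
    then have i: "i < dS" and a: "a < dB" and j: "j < dS" by auto
    have "(\<Sum>b<dB. lift_S dS dB M $$ (i*dB+a,j*dB+b) * X $$ (j*dB+b,i*dB+a))
       = (\<Sum>b<dB. (if a = b then M$$(i,j) else 0) * X $$ (j*dB+b,i*dB+a))"
      by (intro sum.cong refl) (simp add: lift_S_idx[OF i a j])
    then show "(\<Sum>b<dB. lift_S dS dB M $$ (i*dB+a,j*dB+b) * X $$ (j*dB+b,i*dB+a)) = M$$(i,j) * X $$ (j*dB+a,i*dB+a)"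
      using sum_kronecker_left[OF a] by simp
  qed
  also have "\<dots> = (\<Sum>i<dS. \<Sum>j<dS. \<Sum>a<dB. M$$(i,j) * X $$ (j*dB+a,i*dB+a))"
    by (rule sum.cong[OF refl], rule sum.swap)
  also have "\<dots> = ctrace dS (M * partial_trace_B dS dB X)"
    unfolding ctrace_def using M
    by (intro sum.cong refl) (simp add: mult_entry[of _ dS dS _ dS] pt_index sum_distrib_left)
  finally show ?thesis by simp
qed

text \<open>The lift of a contraction is a contraction: it acts blockwise on the B-components.\<close>
lemma contractive_lift_S: assumes c: "contractive dS M" shows "contractive (dS*dB) (lift_S dS dB M)"
  unfolding contractive_def
proof
  fix z :: "nat \<Rightarrow> complex"
  let ?N = "dS*dB" and ?z = "\<lambda>a i. z (i*dB + a)"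
  have "cinner ?N z (mulv ?N (lift_S dS dB M) z)
      = (\<Sum>i<dS. \<Sum>a<dB. cnj (z (i*dB+a)) * (\<Sum>j<dS. \<Sum>b<dB. lift_S dS dB M $$ (i*dB+a,j*dB+b) * z (j*dB+b)))"
    unfolding cinner_def mulv_def sum_split_prod ..
  also have "\<dots> = (\<Sum>i<dS. \<Sum>a<dB. cnj (z (i*dB+a)) * (\<Sum>j<dS. M$$(i,j) * z (j*dB+a)))"
  proof (intro sum.cong refl arg_cong2[where f="(*)"])
    fix i a j assume "i \<in> {..<dS}" "a \<in> {..<dB}" "j \<in> {..<dS}"
    then have i: "i < dS" and a: "a < dB" and j: "j < dS" by auto
    have "(\<Sum>b<dB. lift_S dS dB M $$ (i*dB+a,j*dB+b) * z (j*dB+b)) = (\<Sum>b<dB. (if a = b then M$$(i,j) else 0) * z (j*dB+b))"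
      by (intro sum.cong refl) (simp add: lift_S_idx[OF i a j])
    then show "(\<Sum>b<dB. lift_S dS dB M $$ (i*dB+a,j*dB+b) * z (j*dB+b)) = M$$(i,j) * z (j*dB+a)"
      using sum_kronecker_left[OF a] by simp
  qed
  also have "\<dots> = (\<Sum>a<dB. cinner dS (?z a) (mulv dS M (?z a)))"
    unfolding cinner_def mulv_def by (rule sum.swap)
  finally have "cmod (cinner ?N z (mulv ?N (lift_S dS dB M) z)) \<le> (\<Sum>a<dB. cmod (cinner dS (?z a) (mulv dS M (?z a))))"
    by (simp add: norm_sum)
  also have "\<dots> \<le> (\<Sum>a<dB. sqnorm dS (?z a))"
    by (rule sum_mono) (use c in \<open>simp add: contractive_def\<close>)
  also have "\<dots> = sqnorm ?N z" unfolding sqnorm_def sum_split_prod by (rule sum.swap)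
  finally show "cmod (cinner ?N z (mulv ?N (lift_S dS dB M) z)) \<le> sqnorm ?N z" .
qed

theorem trace_norm_partial_trace: assumes X: "hermitian_mat (dS*dB) X"
  shows "trace_norm (partial_trace_B dS dB X) \<le> trace_norm X"
proof -
  let ?N = "dS*dB" and ?Y = "partial_trace_B dS dB X"
  obtain Z x where Z: "unitary_mat ?N Z" and Xe: "X = eig_op ?N Z x" using spectral[OF X] by blast
  obtain Z' y where Z': "unitary_mat dS Z'" and Ye: "?Y = eig_op dS Z' y" using spectral[OF pt_herm[OF X]] by blast
  have Z'c: "Z' \<in> carrier_mat dS dS" using unitaryD Z' by auto
  define S where "S = eig_op dS Z' (\<lambda>k. if y k < 0 then -1 else 1)"
  have Sc: "S \<in> carrier_mat dS dS" unfolding S_def using Z'c by simp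
  have "ctrace dS (S * ?Y) = (\<Sum>k<dS. y k * cinner dS (colv Z' k) (mulv dS S (colv Z' k)))"
    unfolding Ye by (rule ctrace_mult_eig_op[OF Sc Z'c])
  also have "\<dots> = (\<Sum>k<dS. complex_of_real \<bar>y k\<bar>)"
    by (intro sum.cong refl) (simp add: S_def cinner_eig_op_cols[OF Z'])
  finally have sign: "ctrace dS (S * ?Y) = complex_of_real (trace_norm ?Y)"
    unfolding Ye trace_norm_eig_op[OF Z'] by simp
  have pt: "ctrace dS (S * ?Y) = ctrace ?N (lift_S dS dB S * X)"
    by (rule ctrace_pt[OF Sc]) (use X in \<open>simp add: hermitian_mat_def\<close>)
  have "trace_norm ?Y \<le> cmod (complex_of_real (trace_norm ?Y))" by simp
  also have "\<dots> = cmod (ctrace ?N (lift_S dS dB S * X))" by (simp only: sign[symmetric] pt)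
  also have "\<dots> \<le> trace_norm X"
    unfolding Xe trace_norm_eig_op[OF Z]
    by (rule trace_bound[OF Z lift_S_carrier contractive_lift_S]) (simp add: S_def contractive_eig_op[OF Z'])
  finally show ?thesis .
qed

section \<open>The positive part of a difference of two projectors\<close>

lemma proj_res: assumes U: "unitary_mat n U" and C: "unitary_mat n C"
  shows "(\<Sum>m<n. cinner n x (mulv n (eig_op n U (indic S)) (colv C m)) * cinner n (colv C m) (mulv n (eig_op n U (indic S)) y))
       = cinner n x (mulv n (eig_op n U (indic S)) y)"
proof -
  have Uc: "U \<in> carrier_mat n n" using unitaryD[OF U] by simp
  let ?P = "eig_op n U (indic S)"
  have h: "hermitian_mat n ?P" by (rule eig_op_herm[OF Uc])
  have "(\<Sum>m<n. cinner n x (mulv n ?P (colv C m)) * cinner n (colv C m) (mulv n ?P y)) = (\<Sum>m<n. cinner n (mulv n ?P x) (colv C m) * cinner n (colv C m) (mulv n ?P y))"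
    by (simp add: mulv_herm[OF h])
  also have "\<dots> = cinner n (mulv n ?P x) (mulv n ?P y)" by (rule resolution[OF C, symmetric])
  also have "\<dots> = cinner n x (mulv n ?P (mulv n ?P y))" by (simp add: mulv_herm[OF h])
  also have "\<dots> = cinner n x (mulv n ?P y)" by (rule cinner_cong) (rule proj_idem[OF U])
  finally show ?thesis .
qed

context
  fixes n :: nat and U W C :: "complex mat" and lam :: "nat \<Rightarrow> real" and Ji K :: "nat set"
  assumes U: "unitary_mat n U" and W: "unitary_mat n W" and C: "unitary_mat n C"
    and RF: "eig_op n U (indic Ji) - eig_op n W (indic K) = eig_op n C lam"
begin

abbreviation "PR \<equiv> eig_op n U (indic Ji)"
abbreviation "PF \<equiv> eig_op n W (indic K)"
abbreviation "Rc a b \<equiv> cinner n (colv C a) (mulv n PR (colv C b))"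
abbreviation "Fc a b \<equiv> cinner n (colv C a) (mulv n PF (colv C b))"

lemma Uc: "U \<in> carrier_mat n n" using unitaryD[OF U] by simp
lemma Wc: "W \<in> carrier_mat n n" using unitaryD[OF W] by simp

lemma mulv_diff_col: assumes "k < n" "i < n" shows "mulv n PR (colv C k) i - mulv n PF (colv C k) i = lam k * colv C k i"
proof -
  have "mulv n PR (colv C k) i - mulv n PF (colv C k) i = mulv n (PR - PF) (colv C k) i"
    using Uc Wc assms by (simp add: mulv_minus)
  also have "\<dots> = lam k * colv C k i" unfolding RF by (rule mulv_eig_op_col[OF C assms])
  finally show ?thesis .
qed

lemma entry_diff: assumes "a < n" "b < n" shows "Rc a b - Fc a b = (if a = b then complex_of_real (lam b) else 0)"
proof -
  have "Rc a b - Fc a b = cinner n (colv C a) (\<lambda>i. mulv n PR (colv C b) i - mulv n PF (colv C b) i)"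
    by (simp add: cinner_diff_right)
  also have "\<dots> = cinner n (colv C a) (\<lambda>i. lam b * colv C b i)"
    by (rule cinner_cong) (rule mulv_diff_col[OF assms(2)])
  also have "\<dots> = lam b * cinner n (colv C a) (colv C b)" by (rule cinner_scale_right)
  finally show ?thesis using unitary_cols[OF C assms] by simp
qed

lemma Rc_idem: "(\<Sum>m<n. Rc a m * Rc m b) = Rc a b" by (rule proj_res[OF U C])
lemma Fc_idem: "(\<Sum>m<n. Fc a m * Fc m b) = Fc a b" by (rule proj_res[OF W C])

lemma Rc_eq: assumes "a < n" "b < n" shows "Rc a b = (if a = b then complex_of_real (lam b) else 0) + Fc a b"
proof -
  have "Rc a b = (Rc a b - Fc a b) + Fc a b" by simp
  then show ?thesis unfolding entry_diff[OF assms] .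
qed

text \<open>Key identity, from F R = F F + F (R - F) = F + F (R - F) and R R = R:
  for eigenvectors c_a, c_b of R - F, <c_a, F c_b> (1 + lam b) = <c_a, R c_b> (1 - lam a).\<close>
lemma Fc_Rc_relation: assumes a: "a < n" and b: "b < n" shows "Fc a b * (1 + lam b) = Rc a b * (1 - lam a)"
proof -
  have "(\<Sum>m<n. Fc a m * Rc m b) = (\<Sum>m<n. Fc a m * ((if m = b then complex_of_real (lam b) else 0) + Fc m b))"
    by (intro sum.cong refl) (simp add: Rc_eq[OF _ b])
  also have "\<dots> = (\<Sum>m<n. Fc a m * (if m = b then complex_of_real (lam b) else 0)) + (\<Sum>m<n. Fc a m * Fc m b)"
    by (simp only: distrib_left sum.distrib)
  also have "(\<Sum>m<n. Fc a m * (if m = b then complex_of_real (lam b) else 0)) = Fc a b * lam b"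
    by (rule sum_kronecker_right[OF b])
  also have "(\<Sum>m<n. Fc a m * Fc m b) = Fc a b" by (rule Fc_idem)
  finally have 1: "(\<Sum>m<n. Fc a m * Rc m b) = Fc a b * (1 + lam b)" by (simp add: algebra_simps)
  have "(\<Sum>m<n. Fc a m * Rc m b) = (\<Sum>m<n. (Rc a m - (if a = m then complex_of_real (lam m) else 0)) * Rc m b)"
    by (intro sum.cong refl) (simp add: Rc_eq[OF a])
  also have "\<dots> = (\<Sum>m<n. Rc a m * Rc m b) - (\<Sum>m<n. (if a = m then complex_of_real (lam m) else 0) * Rc m b)"
    by (simp only: left_diff_distrib sum_subtractf)
  also have "(\<Sum>m<n. (if a = m then complex_of_real (lam m) else 0) * Rc m b) = lam a * Rc a b"
    by (rule sum_kronecker_left[OF a])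
  also have "(\<Sum>m<n. Rc a m * Rc m b) = Rc a b" by (rule Rc_idem)
  finally show ?thesis using 1 by (simp add: algebra_simps)
qed

lemma Fc_diag: "Fc k k = complex_of_real (\<Sum>l<n. indic K l * (cmod (cinner n (colv W l) (colv C k)))^2)"
  using proj_weight_qf[OF Wc, of "colv C k" K] by (simp add: proj_weight_def)

lemma diag_entries: assumes k: "k < n" and pos: "lam k > 0"
  shows "Fc k k = complex_of_real ((1 - lam k) / 2)" "Rc k k = complex_of_real ((1 + lam k) / 2)"
proof -
  have e1: "Fc k k * (1 + lam k) = Rc k k * (1 - lam k)" by (rule Fc_Rc_relation[OF k k])
  have e2: "Rc k k = lam k + Fc k k" using Rc_eq[OF k k] by simp
  have "complex_of_real (lam k) * (2 * Fc k k - (1 - lam k)) = 0"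
    using e1 unfolding e2 by (simp add: algebra_simps)
  then have "2 * Fc k k = 1 - lam k" using pos by simp
  then show f: "Fc k k = complex_of_real ((1 - lam k) / 2)" by (simp add: field_simps)
  show "Rc k k = complex_of_real ((1 + lam k) / 2)" unfolding e2 f by (simp add: field_simps)
qed

lemma offdiag_entries: assumes k: "k < n" and l: "l < n" and kl: "k \<noteq> l" and pk: "lam k > 0" and pl: "lam l > 0"
  shows "Rc k l = 0"
proof -
  have e1: "Fc k l * (1 + lam l) = Rc k l * (1 - lam k)" by (rule Fc_Rc_relation[OF k l])
  have e2: "Rc k l = Fc k l" using Rc_eq[OF k l] kl by simp
  have "Fc k l * (lam k + lam l) = 0" using e1 unfolding e2 by (simp add: algebra_simps)
  moreover have "complex_of_real (lam k) + complex_of_real (lam l) \<noteq> 0"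
  proof -
    have "lam k + lam l \<noteq> 0" using pk pl by simp
    then have "complex_of_real (lam k + lam l) \<noteq> 0" by (metis of_real_eq_0_iff)
    then show ?thesis by simp
  qed
  ultimately have "Fc k l = 0" by simp
  then show ?thesis using e2 by simp
qed

abbreviation "rvec k \<equiv> mulv n PR (colv C k)"

lemma cinner_rvec: "cinner n (rvec k) (rvec l) = Rc k l"
proof -
  have "cinner n (rvec k) (rvec l) = cinner n (colv C k) (mulv n PR (rvec l))" by (simp add: mulv_herm[OF eig_op_herm[OF Uc]])
  also have "\<dots> = Rc k l" by (rule cinner_cong) (rule proj_idem[OF U])
  finally show ?thesis .
qed

lemma cinner_rvec_proj: "cinner n (rvec k) y = cinner n (rvec k) (mulv n PR y)"
proof -
  have "cinner n (rvec k) y = cinner n (colv C k) (mulv n PR y)" by (simp add: mulv_herm[OF eig_op_herm[OF Uc]])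
  also have "\<dots> = cinner n (colv C k) (mulv n PR (mulv n PR y))" by (rule cinner_cong) (rule proj_idem[OF U, symmetric])
  also have "\<dots> = cinner n (rvec k) (mulv n PR y)" by (simp add: mulv_herm[OF eig_op_herm[OF Uc]])
  finally show ?thesis .
qed

definition "rho k = (1 + lam k) / 2"
definition "rhat k = (\<lambda>i. complex_of_real (1 / sqrt (rho k)) * rvec k i)"

lemma rhat_orth: assumes "k \<in> {k. k < n \<and> lam k > 0}" "l \<in> {k. k < n \<and> lam k > 0}"
  shows "cinner n (rhat k) (rhat l) = (if k = l then 1 else 0)"
proof -
  have k: "k < n" "lam k > 0" and l: "l < n" "lam l > 0" using assms by auto
  have "cinner n (rhat k) (rhat l) = complex_of_real (1 / sqrt (rho k)) * complex_of_real (1 / sqrt (rho l)) * Rc k l"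
    unfolding rhat_def cinner_scale_left cinner_scale_right cinner_rvec by simp
  also have "\<dots> = (if k = l then 1 else 0)"
  proof (cases "k = l")
    case True
    have rp: "rho k > 0" unfolding rho_def using k by simp
    have ss: "sqrt (rho k) * sqrt (rho k) = rho k" using rp by (simp add: real_sqrt_mult_self)
    have "(1 / sqrt (rho k)) * (1 / sqrt (rho k)) * rho k = rho k / (sqrt (rho k) * sqrt (rho k))" by simp
    also have "\<dots> = 1" unfolding ss using rp by simp
    finally have "(1 / sqrt (rho k)) * (1 / sqrt (rho k)) * rho k = 1" .
    then have c1: "complex_of_real ((1 / sqrt (rho k)) * (1 / sqrt (rho k)) * rho k) = 1" by simp
    have "Rc k k = complex_of_real (rho k)" using diag_entries(2)[OF k] unfolding rho_def .
    then have "complex_of_real (1 / sqrt (rho k)) * complex_of_real (1 / sqrt (rho k)) * Rc k k = 1"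
      using c1 by (simp only: of_real_mult)
    then show ?thesis using True by simp
  next
    case False
    then show ?thesis using offdiag_entries[OF k(1) l(1) False k(2) l(2)] by simp
  qed
  finally show ?thesis .
qed

lemma sqnorm_rhat: assumes "k < n" "lam k > 0" shows "sqnorm n (rhat k) = 1"
proof -
  have "complex_of_real (sqnorm n (rhat k)) = 1" unfolding sqnorm_cinner using rhat_orth[of k k] assms by simp
  then show ?thesis by (metis of_real_1 of_real_eq_iff)
qed

lemma cinner_col_rhat: assumes j: "j < n"
  shows "cinner n (colv U j) (rhat k) = complex_of_real (1 / sqrt (rho k)) * (indic Ji j * cinner n (colv U j) (colv C k))"
  unfolding rhat_def cinner_scale_right cinner_col_eig_op[OF U j] ..

text \<open>R - F has at most rank R = |Ji| positive eigenvalues (Bessel in the range of R).\<close>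
lemma card_positive_eigs: assumes Ji: "Ji \<subseteq> {..<n}"
  shows "card {k. k < n \<and> lam k > 0} \<le> card Ji"
proof -
  let ?Kp = "{k. k < n \<and> lam k > 0}"
  have fKp: "finite ?Kp" by simp
  have fJi: "finite Ji" using Ji finite_subset by blast
  have "real (card ?Kp) = (\<Sum>k\<in>?Kp. sqnorm n (rhat k))" by (simp add: sqnorm_rhat)
  also have "\<dots> = (\<Sum>k\<in>?Kp. \<Sum>j<n. (cmod (cinner n (colv U j) (rhat k)))^2)"
    by (simp add: parseval[OF U])
  also have "\<dots> = (\<Sum>k\<in>?Kp. \<Sum>j\<in>Ji. (cmod (cinner n (colv U j) (rhat k)))^2)"
  proof (rule sum.cong[OF refl], rule sum.mono_neutral_right)
    fix k
    show "finite {..<n}" by simp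
    show "Ji \<subseteq> {..<n}" by (rule Ji)
    show "\<forall>j\<in>{..<n} - Ji. (cmod (cinner n (colv U j) (rhat k)))^2 = 0"
      by (auto simp: cinner_col_rhat indic_def)
  qed
  also have "\<dots> = (\<Sum>j\<in>Ji. \<Sum>k\<in>?Kp. (cmod (cinner n (rhat k) (colv U j)))^2)"
    by (subst sum.swap) (simp add: cinner_conj[symmetric, of n "colv U _"])
  also have "\<dots> \<le> (\<Sum>j\<in>Ji. sqnorm n (colv U j))"
    by (rule sum_mono, rule bessel[OF fKp]) (rule rhat_orth)
  also have "\<dots> = real (card Ji)"
    using Ji by (simp add: sqnorm_col[OF U] subset_iff)
  finally show ?thesis by simp
qed

lemma cinner_out_rvec: assumes l: "l < n" "l \<notin> K" and k: "k < n"
  shows "cinner n (colv W l) (rvec k) = lam k * cinner n (colv W l) (colv C k)"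
proof -
  have "cinner n (colv W l) (rvec k) = cinner n (colv W l) (\<lambda>i. lam k * colv C k i + mulv n PF (colv C k) i)"
    by (rule cinner_cong) (metis mulv_diff_col[OF k] add_diff_cancel_left' diff_add_cancel)
  also have "\<dots> = lam k * cinner n (colv W l) (colv C k) + indic K l * cinner n (colv W l) (colv C k)"
    unfolding cinner_add_right cinner_scale_right cinner_col_eig_op[OF W l(1)] ..
  finally show ?thesis using l(2) by (simp add: indic_def)
qed

lemma outside_weight: assumes k: "k < n" and pos: "lam k > 0" and K: "K \<subseteq> {..<n}"
  shows "(\<Sum>l\<in>{..<n} - K. (cmod (cinner n (colv W l) (colv C k)))^2) = rho k"
proof -
  have tot: "(\<Sum>l<n. (cmod (cinner n (colv W l) (colv C k)))^2) = 1"
    unfolding parseval[OF W] by (rule sqnorm_col[OF C k])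
  have "(\<Sum>l<n. indic K l * (cmod (cinner n (colv W l) (colv C k)))^2) = (\<Sum>l\<in>K. (cmod (cinner n (colv W l) (colv C k)))^2)"
    by (rule sum.mono_neutral_cong_right) (use K in \<open>auto simp: indic_def\<close>)
  moreover have "complex_of_real (\<Sum>l<n. indic K l * (cmod (cinner n (colv W l) (colv C k)))^2) = complex_of_real ((1 - lam k) / 2)"
    using Fc_diag[of k] diag_entries(1)[OF k pos] by simp
  ultimately have inK: "(\<Sum>l\<in>K. (cmod (cinner n (colv W l) (colv C k)))^2) = (1 - lam k) / 2"
    using of_real_eq_iff by metis
  have "(\<Sum>l<n. (cmod (cinner n (colv W l) (colv C k)))^2) = (\<Sum>l\<in>K. (cmod (cinner n (colv W l) (colv C k)))^2) + (\<Sum>l\<in>{..<n} - K. (cmod (cinner n (colv W l) (colv C k)))^2)"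
    using sum.subset_diff[OF K, of "\<lambda>l. (cmod (cinner n (colv W l) (colv C k)))^2"] by simp
  then have "(\<Sum>l\<in>{..<n} - K. (cmod (cinner n (colv W l) (colv C k)))^2) = (\<Sum>l<n. (cmod (cinner n (colv W l) (colv C k)))^2) - (\<Sum>l\<in>K. (cmod (cinner n (colv W l) (colv C k)))^2)"
    by simp
  also have "\<dots> = 1 - (1 - lam k) / 2" unfolding tot inK ..
  finally show ?thesis unfolding rho_def by (simp add: field_simps)
qed

lemma square_positive_eig: assumes k: "k < n" and pos: "lam k > 0" and K: "K \<subseteq> {..<n}"
  shows "(lam k)^2 = (\<Sum>l\<in>{..<n} - K. (cmod (cinner n (colv W l) (rhat k)))^2)"
proof -
  have rp: "rho k > 0" unfolding rho_def using pos by simp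
  have "(\<Sum>l\<in>{..<n} - K. (cmod (cinner n (colv W l) (rhat k)))^2)
      = (\<Sum>l\<in>{..<n} - K. (1 / rho k) * (lam k)^2 * (cmod (cinner n (colv W l) (colv C k)))^2)"
  proof (rule sum.cong[OF refl])
    fix l assume "l \<in> {..<n} - K"
    then have l: "l < n" "l \<notin> K" by auto
    have "cinner n (colv W l) (rhat k) = complex_of_real (1 / sqrt (rho k)) * (lam k * cinner n (colv W l) (colv C k))"
      unfolding rhat_def cinner_scale_right cinner_out_rvec[OF l k] ..
    then have "cmod (cinner n (colv W l) (rhat k)) = (1 / sqrt (rho k)) * \<bar>lam k\<bar> * cmod (cinner n (colv W l) (colv C k))"
      using rp by (simp add: norm_mult norm_divide)
    then show "(cmod (cinner n (colv W l) (rhat k)))^2 = (1 / rho k) * (lam k)^2 * (cmod (cinner n (colv W l) (colv C k)))^2"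
      using rp by (simp add: power_mult_distrib power_divide)
  qed
  also have "\<dots> = (1 / rho k) * (lam k)^2 * (\<Sum>l\<in>{..<n} - K. (cmod (cinner n (colv W l) (colv C k)))^2)"
    by (rule sum_distrib_left[symmetric])
  also have "\<dots> = (1 / rho k) * (lam k)^2 * rho k"
    unfolding outside_weight[OF k pos K] ..
  also have "\<dots> = (lam k)^2" using rp by simp
  finally show ?thesis by simp
qed

lemma sum_squares_positive_eigs: assumes Ji: "Ji \<subseteq> {..<n}" and K: "K \<subseteq> {..<n}"
  shows "(\<Sum>k\<in>{k. k < n \<and> lam k > 0}. (lam k)^2) \<le> (\<Sum>j\<in>Ji. \<Sum>l\<in>{..<n} - K. (cmod (cinner n (colv W l) (colv U j)))^2)"
proof -
  let ?Kp = "{k. k < n \<and> lam k > 0}"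
  let ?D = "{..<n} - K"
  have fKp: "finite ?Kp" by simp
  have "(\<Sum>k\<in>?Kp. (lam k)^2) = (\<Sum>k\<in>?Kp. \<Sum>l\<in>?D. (cmod (cinner n (colv W l) (rhat k)))^2)"
    by (rule sum.cong[OF refl]) (use square_positive_eig K in auto)
  also have "\<dots> = (\<Sum>l\<in>?D. \<Sum>k\<in>?Kp. (cmod (cinner n (rhat k) (mulv n PR (colv W l))))^2)"
  proof (subst sum.swap, intro sum.cong refl)
    fix l k
    have "cinner n (rhat k) (colv W l) = cinner n (rhat k) (mulv n PR (colv W l))"
      unfolding rhat_def cinner_scale_left by (simp add: cinner_rvec_proj[symmetric])
    then show "(cmod (cinner n (colv W l) (rhat k)))^2 = (cmod (cinner n (rhat k) (mulv n PR (colv W l))))^2"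
      by (metis cmod_cinner_swap)
  qed
  also have "\<dots> \<le> (\<Sum>l\<in>?D. sqnorm n (mulv n PR (colv W l)))"
    by (rule sum_mono, rule bessel[OF fKp]) (rule rhat_orth)
  also have "\<dots> = (\<Sum>l\<in>?D. \<Sum>j\<in>Ji. (cmod (cinner n (colv U j) (colv W l)))^2)"
  proof (rule sum.cong[OF refl])
    fix l
    have "sqnorm n (mulv n PR (colv W l)) = (\<Sum>j<n. (cmod (cinner n (colv U j) (mulv n PR (colv W l))))^2)"
      by (rule parseval[OF U, symmetric])
    also have "\<dots> = (\<Sum>j<n. indic Ji j * (cmod (cinner n (colv U j) (colv W l)))^2)"
      by (intro sum.cong refl) (simp add: cinner_col_eig_op[OF U] norm_mult indic_def)
    also have "\<dots> = (\<Sum>j\<in>Ji. (cmod (cinner n (colv U j) (colv W l)))^2)"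
      by (rule sum.mono_neutral_cong_right) (use Ji in \<open>auto simp: indic_def\<close>)
    finally show "sqnorm n (mulv n PR (colv W l)) = (\<Sum>j\<in>Ji. (cmod (cinner n (colv U j) (colv W l)))^2)" .
  qed
  also have "\<dots> = (\<Sum>j\<in>Ji. \<Sum>l\<in>?D. (cmod (cinner n (colv W l) (colv U j)))^2)"
    by (subst sum.swap) (simp add: cmod_cinner_swap)
  finally show ?thesis .
qed

lemma positive_part_bound: assumes Ji: "Ji \<subseteq> {..<n}" and K: "K \<subseteq> {..<n}"
  and leak: "(\<Sum>j\<in>Ji. \<Sum>l\<in>{..<n} - K. (cmod (cinner n (colv W l) (colv U j)))^2) \<le> real (card Ji) * \<delta>^2"
  and d0: "\<delta> \<ge> 0"
  shows "(\<Sum>k\<in>{k. k < n \<and> lam k > 0}. lam k) \<le> real (card Ji) * \<delta>"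
proof (rule power2_le_imp_le)
  let ?Kp = "{k. k < n \<and> lam k > 0}"
  have "(\<Sum>k\<in>?Kp. lam k)^2 \<le> real (card ?Kp) * (\<Sum>k\<in>?Kp. (lam k)^2)"
    by (rule sum_square_le_card_sum_squares) simp
  also have "\<dots> \<le> real (card Ji) * (real (card Ji) * \<delta>^2)"
  proof (rule mult_mono)
    show "real (card ?Kp) \<le> real (card Ji)" using card_positive_eigs[OF Ji] by simp
    show "(\<Sum>k\<in>?Kp. (lam k)^2) \<le> real (card Ji) * \<delta>^2"
      using sum_squares_positive_eigs[OF Ji K] leak by linarith
  qed (auto intro: sum_nonneg)
  also have "\<dots> = (real (card Ji) * \<delta>)^2" by (simp add: power2_eq_square)
  finally show "(\<Sum>k\<in>?Kp. lam k)^2 \<le> (real (card Ji) * \<delta>)^2" .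
  show "0 \<le> real (card Ji) * \<delta>" using d0 by simp
qed

end

lemma trace_proj_le_positive_sum: assumes Z: "unitary_mat n Z" and C: "unitary_mat n C"
  shows "Re (ctrace n (eig_op n Z (indic T) * eig_op n C lam)) \<le> (\<Sum>k\<in>{k. k < n \<and> lam k > 0}. lam k)"
proof -
  let ?p = "\<lambda>k. proj_weight n Z T (colv C k)"
  have p01: "0 \<le> ?p k \<and> ?p k \<le> 1" if "k < n" for k
    using proj_weight_bounds[OF Z, of T "colv C k"] sqnorm_col[OF C that] by simp
  have "Re (ctrace n (eig_op n Z (indic T) * eig_op n C lam)) = (\<Sum>k<n. lam k * ?p k)"
    unfolding ctrace_proj_eig_op[OF Z C] by simp
  also have "\<dots> \<le> (\<Sum>k<n. if lam k > 0 then lam k else 0)"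
  proof (rule sum_mono)
    fix k assume "k \<in> {..<n}"
    then have "0 \<le> ?p k" "?p k \<le> 1" using p01 by auto
    then show "lam k * ?p k \<le> (if lam k > 0 then lam k else 0)"
      by (cases "lam k > 0") (auto simp: mult_le_cancel_left1 mult_nonpos_nonneg)
  qed
  also have "\<dots> = (\<Sum>k\<in>{k \<in> {..<n}. lam k > 0}. lam k)"
    by (rule sum.inter_filter[symmetric]) simp
  also have "{k \<in> {..<n}. lam k > 0} = {k. k < n \<and> lam k > 0}" by auto
  finally show ?thesis .
qed

theorem trace_proj_diff_bound: assumes U: "unitary_mat n U" and W: "unitary_mat n W" and Z: "unitary_mat n Z"
  and Ji: "Ji \<subseteq> {..<n}" and K: "K \<subseteq> {..<n}"
  and leak: "(\<Sum>j\<in>Ji. \<Sum>l\<in>{..<n} - K. (cmod (cinner n (colv W l) (colv U j)))^2) \<le> real (card Ji) * \<delta>^2"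
  and d0: "\<delta> \<ge> 0"
  shows "Re (ctrace n (eig_op n Z (indic T) * (eig_op n U (indic Ji) - eig_op n W (indic K)))) \<le> real (card Ji) * \<delta>"
proof -
  obtain C lam where C: "unitary_mat n C" and RF: "eig_op n U (indic Ji) - eig_op n W (indic K) = eig_op n C lam"
    using spectral[OF eig_op_diff_herm] unitaryD(1)[OF U] unitaryD(1)[OF W] by blast
  show ?thesis
    unfolding RF
    by (rule order.trans[OF trace_proj_le_positive_sum[OF Z C] positive_part_bound[OF U W C RF Ji K leak d0]])
qed

section \<open>A Davis--Kahan leakage estimate\<close>

text \<open>If H = U diag(h) U^* and H0 = W diag(g) W^*, an eigenvector u_j of H whose eigenvalue lies at
  distance >= eps inside the window has weight at most (||(H - H0) u_j|| / eps)^2 on the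
  eigenvectors of H0 outside the window, because <w_l, (H - H0) u_j> = (h j - g l) <w_l, u_j>.\<close>
lemma leakage_single:
  assumes U: "unitary_mat n U" and W: "unitary_mat n W" and j: "j < n"
    and K: "K = {l. l < n \<and> g l \<in> {E..E + \<Delta>}}"
    and hj: "E + \<epsilon> \<le> h j" "h j \<le> E + \<Delta> - \<epsilon>" and eps: "\<epsilon> > 0"
    and V: "sqnorm n (\<lambda>i. mulv n (eig_op n U h) (colv U j) i - mulv n (eig_op n W g) (colv U j) i) \<le> vn^2"
  shows "(\<Sum>l\<in>{..<n} - K. (cmod (cinner n (colv W l) (colv U j)))^2) \<le> (vn / \<epsilon>)^2"
proof -
  let ?v = "\<lambda>i. mulv n (eig_op n U h) (colv U j) i - mulv n (eig_op n W g) (colv U j) i"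
  have key: "cinner n (colv W l) ?v = complex_of_real (h j - g l) * cinner n (colv W l) (colv U j)"
    if l: "l < n" for l
  proof -
    have "cinner n (colv W l) (mulv n (eig_op n U h) (colv U j)) = h j * cinner n (colv W l) (colv U j)"
      by (subst cinner_cong[OF mulv_eig_op_col[OF U j]]) (simp_all add: cinner_scale_right)
    then show ?thesis
      unfolding cinner_diff_right cinner_col_eig_op[OF W l] by (simp add: algebra_simps)
  qed
  have "(\<Sum>l\<in>{..<n} - K. (cmod (cinner n (colv W l) (colv U j)))^2)
      \<le> (\<Sum>l\<in>{..<n} - K. (cmod (cinner n (colv W l) ?v))^2 / \<epsilon>^2)"
  proof (rule sum_mono)
    fix l assume "l \<in> {..<n} - K"
    then have l: "l < n" and gap: "\<epsilon> \<le> \<bar>h j - g l\<bar>" using K hj by auto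
    have "\<epsilon> * cmod (cinner n (colv W l) (colv U j)) \<le> cmod (cinner n (colv W l) ?v)"
      unfolding key[OF l] norm_mult norm_of_real using gap by (simp add: mult_right_mono)
    then have "(\<epsilon> * cmod (cinner n (colv W l) (colv U j)))^2 \<le> (cmod (cinner n (colv W l) ?v))^2"
      using eps by (intro power_mono) auto
    then show "(cmod (cinner n (colv W l) (colv U j)))^2 \<le> (cmod (cinner n (colv W l) ?v))^2 / \<epsilon>^2"
      using eps by (simp add: field_simps power_mult_distrib)
  qed
  also have "\<dots> \<le> (\<Sum>l<n. (cmod (cinner n (colv W l) ?v))^2 / \<epsilon>^2)"
    by (rule sum_mono2) auto
  also have "\<dots> = sqnorm n ?v / \<epsilon>^2" unfolding sum_divide_distrib[symmetric] parseval[OF W] ..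
  also have "\<dots> \<le> vn^2 / \<epsilon>^2" using V eps by (simp add: divide_right_mono)
  also have "\<dots> = (vn / \<epsilon>)^2" by (simp add: power_divide)
  finally show ?thesis .
qed

lemma leakage_bound:
  assumes U: "unitary_mat n U" and W: "unitary_mat n W"
    and Ji: "Ji = {j. j < n \<and> h j \<in> {E + \<epsilon>..E + \<Delta> - \<epsilon>}}"
    and K: "K = {l. l < n \<and> g l \<in> {E..E + \<Delta>}}" and eps: "\<epsilon> > 0"
    and V: "\<And>j. j < n \<Longrightarrow> sqnorm n (\<lambda>i. mulv n (eig_op n U h) (colv U j) i - mulv n (eig_op n W g) (colv U j) i) \<le> vn^2"
  shows "(\<Sum>j\<in>Ji. \<Sum>l\<in>{..<n} - K. (cmod (cinner n (colv W l) (colv U j)))^2) \<le> real (card Ji) * (vn / \<epsilon>)^2"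
proof -
  have "(\<Sum>j\<in>Ji. \<Sum>l\<in>{..<n} - K. (cmod (cinner n (colv W l) (colv U j)))^2) \<le> (\<Sum>j\<in>Ji. (vn / \<epsilon>)^2)"
    by (rule sum_mono, rule leakage_single[OF U W _ K _ _ eps V]) (use Ji in auto)
  then show ?thesis by simp
qed

lemma window_trace_bound:
  assumes U: "unitary_mat n U" and W: "unitary_mat n W" and Z: "unitary_mat n Z"
    and Ji: "Ji = {j. j < n \<and> h j \<in> {E + \<epsilon>..E + \<Delta> - \<epsilon>}}"
    and J: "J = {j. j < n \<and> h j \<in> {E..E + \<Delta>}}"
    and K: "K = {l. l < n \<and> g l \<in> {E..E + \<Delta>}}"
    and eps: "\<epsilon> > 0" and vn: "vn \<ge> 0"
    and V: "\<And>j. j < n \<Longrightarrow> sqnorm n (\<lambda>i. mulv n (eig_op n U h) (colv U j) i - mulv n (eig_op n W g) (colv U j) i) \<le> vn^2"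
  shows "(\<Sum>k\<in>J. proj_weight n Z T (colv U k)) - (\<Sum>k\<in>K. proj_weight n Z T (colv W k))
           \<le> real (card Ji) * (vn / \<epsilon>) + real (card (J - Ji))"
proof -
  have Uc: "U \<in> carrier_mat n n" and Wc: "W \<in> carrier_mat n n" and Zc: "Z \<in> carrier_mat n n"
    using U W Z unitaryD by auto
  have JiJ: "Ji \<subseteq> J" using Ji J eps by auto
  have Jn: "J \<subseteq> {..<n}" and Jin: "Ji \<subseteq> {..<n}" and Kn: "K \<subseteq> {..<n}" using J Ji K by auto
  have fJ: "finite J" using Jn finite_subset by blast
  have "Re (ctrace n (eig_op n Z (indic T) * (eig_op n U (indic Ji) - eig_op n W (indic K)))) \<le> real (card Ji) * (vn / \<epsilon>)"
    by (rule trace_proj_diff_bound[OF U W Z Jin Kn leakage_bound[OF U W Ji K eps V]])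
      (use eps vn in \<open>auto intro!: divide_nonneg_pos\<close>)
  moreover have "ctrace n (eig_op n Z (indic T) * (eig_op n U (indic Ji) - eig_op n W (indic K)))
      = ctrace n (eig_op n Z (indic T) * eig_op n U (indic Ji)) - ctrace n (eig_op n Z (indic T) * eig_op n W (indic K))"
    by (subst mult_minus_distrib_mat[of _ n n]) (use Uc Wc Zc in \<open>auto intro!: ctrace_minus\<close>)
  moreover have "\<dots> = complex_of_real ((\<Sum>k\<in>Ji. proj_weight n Z T (colv U k)) - (\<Sum>k\<in>K. proj_weight n Z T (colv W k)))"
    unfolding ctrace_proj_eig_op[OF Z U] ctrace_proj_eig_op[OF Z W] sum_indic[OF Jin] sum_indic[OF Kn] by simp
  moreover have "(\<Sum>k\<in>J. proj_weight n Z T (colv U k)) = (\<Sum>k\<in>Ji. proj_weight n Z T (colv U k)) + (\<Sum>k\<in>J - Ji. proj_weight n Z T (colv U k))"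
    using sum.subset_diff[OF JiJ fJ, of "\<lambda>k. proj_weight n Z T (colv U k)"] by (simp add: add.commute)
  moreover have "(\<Sum>k\<in>J - Ji. proj_weight n Z T (colv U k)) \<le> (\<Sum>k\<in>J - Ji. 1)"
    using proj_weight_bounds(2)[OF Z] sqnorm_col[OF U] Jn by (intro sum_mono) (metis DiffD1 lessThan_iff subsetD)
  ultimately show ?thesis by simp
qed

lemma sum_sq_le_sq_sum: fixes a :: "nat \<Rightarrow> real" assumes "\<And>i. i \<in> A \<Longrightarrow> a i \<ge> 0" "finite A"
  shows "(\<Sum>i\<in>A. (a i)^2) \<le> (\<Sum>i\<in>A. a i)^2"
  using assms(2,1)
proof (induction A rule: finite_induct)
  case (insert x F)
  have "(\<Sum>i\<in>insert x F. (a i)^2) \<le> (a x)^2 + (\<Sum>i\<in>F. a i)^2" using insert by simp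
  also have "\<dots> \<le> (a x + (\<Sum>i\<in>F. a i))^2"
    using insert by (simp add: sum_nonneg power2_eq_square algebra_simps)
  also have "\<dots> = (\<Sum>i\<in>insert x F. a i)^2" using insert by simp
  finally show ?case .
qed simp

lemma vec_norm2_le_l1: "vec_norm2 w \<le> (\<Sum>i<dim_vec w. cmod (w $ i))"
proof -
  have "(\<Sum>i<dim_vec w. (cmod (w $ i))^2) \<le> (\<Sum>i<dim_vec w. cmod (w $ i))^2"
    by (rule sum_sq_le_sq_sum) auto
  then have "sqrt (\<Sum>i<dim_vec w. (cmod (w $ i))^2) \<le> sqrt ((\<Sum>i<dim_vec w. cmod (w $ i))^2)"
    by (rule real_sqrt_le_mono)
  also have "\<dots> = (\<Sum>i<dim_vec w. cmod (w $ i))" by (simp add: sum_nonneg)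
  finally show ?thesis unfolding vec_norm2_def .
qed

lemma entry_le_vec_norm2: "k < dim_vec v \<Longrightarrow> cmod (v $ k) \<le> vec_norm2 v"
proof -
  assume k: "k < dim_vec v"
  have "(cmod (v $ k))^2 \<le> (\<Sum>i<dim_vec v. (cmod (v $ i))^2)"
    by (rule member_le_sum) (use k in auto)
  then have "sqrt ((cmod (v $ k))^2) \<le> sqrt (\<Sum>i<dim_vec v. (cmod (v $ i))^2)"
    by (rule real_sqrt_le_mono)
  then show ?thesis unfolding vec_norm2_def by simp
qed

text \<open>The set defining the operator norm is bounded (by the l1 norm of the entries), so
  op_norm is a genuine supremum.\<close>
lemma op_norm_bdd: "bdd_above {vec_norm2 (A *\<^sub>v v) | v. v \<in> carrier_vec (dim_col A) \<and> vec_norm2 v \<le> 1}"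
proof (rule bdd_aboveI, clarify)
  fix v :: "complex vec" assume v: "v \<in> carrier_vec (dim_col A)" "vec_norm2 v \<le> 1"
  have "vec_norm2 (A *\<^sub>v v) \<le> (\<Sum>i<dim_row A. cmod ((A *\<^sub>v v) $ i))"
    using vec_norm2_le_l1[of "A *\<^sub>v v"] by simp
  also have "\<dots> \<le> (\<Sum>i<dim_row A. \<Sum>k<dim_col A. cmod (A $$ (i,k)))"
  proof (rule sum_mono)
    fix i assume "i \<in> {..<dim_row A}"
    then have "(A *\<^sub>v v) $ i = (\<Sum>k<dim_col A. A $$ (i,k) * v $ k)"
      using v by (simp add: index_mult_mat_vec scalar_prod_def lessThan_atLeast0)
    then have "cmod ((A *\<^sub>v v) $ i) \<le> (\<Sum>k<dim_col A. cmod (A $$ (i,k) * v $ k))"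
      by (simp add: norm_sum)
    also have "\<dots> \<le> (\<Sum>k<dim_col A. cmod (A $$ (i,k)))"
    proof (rule sum_mono)
      fix k assume "k \<in> {..<dim_col A}"
      then have "cmod (v $ k) \<le> 1" using entry_le_vec_norm2[of k v] v by auto
      then show "cmod (A $$ (i,k) * v $ k) \<le> cmod (A $$ (i,k))"
        by (simp add: norm_mult mult_left_le)
    qed
    finally show "cmod ((A *\<^sub>v v) $ i) \<le> (\<Sum>k<dim_col A. cmod (A $$ (i,k)))" .
  qed
  finally show "vec_norm2 (A *\<^sub>v v) \<le> (\<Sum>i<dim_row A. \<Sum>k<dim_col A. cmod (A $$ (i,k)))" .
qed

lemma op_norm_nonneg: "op_norm A \<ge> 0"
proof -
  have z: "vec_norm2 (0\<^sub>v (dim_col A) :: complex vec) \<le> 1" by (simp add: vec_norm2_def)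
  have "vec_norm2 (A *\<^sub>v 0\<^sub>v (dim_col A)) \<in> {vec_norm2 (A *\<^sub>v v) | v. v \<in> carrier_vec (dim_col A) \<and> vec_norm2 v \<le> 1}"
    unfolding mem_Collect_eq by (rule exI[of _ "0\<^sub>v (dim_col A)"]) (use z in simp)
  then have "vec_norm2 (A *\<^sub>v 0\<^sub>v (dim_col A)) \<le> op_norm A"
    unfolding op_norm_def by (rule cSup_upper[OF _ op_norm_bdd])
  moreover have "vec_norm2 (A *\<^sub>v 0\<^sub>v (dim_col A)) \<ge> 0" unfolding vec_norm2_def by simp
  ultimately show ?thesis by linarith
qed

lemma sqnorm_mulv_col_le: assumes V: "V \<in> carrier_mat n n" and U: "unitary_mat n U" and j: "j < n"
  shows "sqnorm n (mulv n V (colv U j)) \<le> (op_norm V)^2"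
proof -
  have Uc: "U \<in> carrier_mat n n" using unitaryD[OF U] by simp
  let ?v = "col U j"
  have "vec_norm2 ?v = sqrt (sqnorm n (colv U j))"
    unfolding vec_norm2_def sqnorm_def colv_def using Uc j by simp
  then have v1: "vec_norm2 ?v \<le> 1" using sqnorm_col[OF U j] by simp
  have "sqrt (sqnorm n (mulv n V (colv U j))) = vec_norm2 (V *\<^sub>v ?v)"
    unfolding vec_norm2_def sqnorm_def mulv_def colv_def using V Uc j
    by (simp add: index_mult_mat_vec scalar_prod_def lessThan_atLeast0)
  also have "\<dots> \<le> op_norm V"
  proof -
    have vc: "col U j \<in> carrier_vec (dim_col V)" using V Uc by auto
    show ?thesis unfolding op_norm_def by (rule cSup_upper) (use vc v1 op_norm_bdd in auto)
  qed
  finally have s: "sqrt (sqnorm n (mulv n V (colv U j))) \<le> op_norm V" .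
  have "sqnorm n (mulv n V (colv U j)) = (sqrt (sqnorm n (mulv n V (colv U j))))^2"
    by (rule real_sqrt_pow2[symmetric], rule sqnorm_nonneg)
  also have "\<dots> \<le> (op_norm V)^2" by (rule power_mono[OF s]) (simp add: sqnorm_nonneg)
  finally show ?thesis .
qed

lemma perturbation_col_bound:
  assumes Vc: "V \<in> carrier_mat n n" and B: "B \<in> carrier_mat n n" and HV: "A = B + V"
    and U: "unitary_mat n U" and j: "j < n"
  shows "sqnorm n (\<lambda>i. mulv n A (colv U j) i - mulv n B (colv U j) i) \<le> (op_norm V)^2"
    and "sqnorm n (\<lambda>i. mulv n B (colv U j) i - mulv n A (colv U j) i) \<le> (op_norm V)^2"
proof -
  have diff: "mulv n A x i - mulv n B x i = mulv n V x i" if "i < n" for x i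
    unfolding HV mulv_def using that Vc B by (simp add: sum.distrib distrib_right)
  have "sqnorm n (\<lambda>i. mulv n A (colv U j) i - mulv n B (colv U j) i) = sqnorm n (mulv n V (colv U j))"
    unfolding sqnorm_def by (intro sum.cong refl) (simp add: diff)
  moreover have "sqnorm n (\<lambda>i. mulv n B (colv U j) i - mulv n A (colv U j) i) = sqnorm n (mulv n V (colv U j))"
    unfolding sqnorm_def
  proof (intro sum.cong refl)
    fix i assume "i \<in> {..<n}"
    then have "mulv n B (colv U j) i - mulv n A (colv U j) i = - mulv n V (colv U j) i"
      using diff[of i "colv U j"] by (simp add: algebra_simps)
    then show "(cmod (mulv n B (colv U j) i - mulv n A (colv U j) i))^2 = (cmod (mulv n V (colv U j) i))^2"
      by simp
  qed
  ultimately show "sqnorm n (\<lambda>i. mulv n A (colv U j) i - mulv n B (colv U j) i) \<le> (op_norm V)^2"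
    and "sqnorm n (\<lambda>i. mulv n B (colv U j) i - mulv n A (colv U j) i) \<le> (op_norm V)^2"
    using sqnorm_mulv_col_le[OF Vc U j] by simp_all
qed

section \<open>Trace distance of two normalised spectral projectors\<close>

lemma proj_weight_sum_bounds: assumes Z: "unitary_mat n Z" and U: "unitary_mat n U" and J: "J \<subseteq> {..<n}"
  shows "0 \<le> (\<Sum>k\<in>J. proj_weight n Z T (colv U k))"
    and "(\<Sum>k\<in>J. proj_weight n Z T (colv U k)) \<le> real (card J)"
    and "(\<Sum>k\<in>J. proj_weight n Z ({..<n} - T) (colv U k)) = real (card J) - (\<Sum>k\<in>J. proj_weight n Z T (colv U k))"
proof -
  have unit: "sqnorm n (colv U k) = 1" if "k \<in> J" for k using sqnorm_col[OF U] that J by auto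
  show "0 \<le> (\<Sum>k\<in>J. proj_weight n Z T (colv U k))" by (rule sum_nonneg) (rule proj_weight_bounds(1)[OF Z])
  have "(\<Sum>k\<in>J. proj_weight n Z T (colv U k)) \<le> (\<Sum>k\<in>J. 1)"
    by (rule sum_mono) (metis proj_weight_bounds(2)[OF Z] unit)
  then show "(\<Sum>k\<in>J. proj_weight n Z T (colv U k)) \<le> real (card J)" by simp
  show "(\<Sum>k\<in>J. proj_weight n Z ({..<n} - T) (colv U k)) = real (card J) - (\<Sum>k\<in>J. proj_weight n Z T (colv U k))"
    by (simp add: proj_weight_compl[OF Z] unit sum_subtractf)
qed

lemma half_trace_norm_traceless: assumes Z: "unitary_mat n Z" and x0: "(\<Sum>k<n. x k) = 0"
  shows "trace_norm (eig_op n Z x) / 2 = Re (ctrace n (eig_op n Z (indic {k. k < n \<and> x k > 0}) * eig_op n Z x))"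
proof -
  let ?T = "{k. k < n \<and> x k > 0}"
  have Zc: "Z \<in> carrier_mat n n" using unitaryD[OF Z] by simp
  have "ctrace n (eig_op n Z (indic ?T) * eig_op n Z x) = (\<Sum>k<n. complex_of_real (x k * indic ?T k))"
    unfolding ctrace_mult_eig_op[OF eig_op_carrier[OF Zc] Zc]
    by (intro sum.cong refl) (simp add: cinner_eig_op_cols[OF Z])
  moreover have "(\<Sum>k<n. \<bar>x k\<bar>) = (\<Sum>k<n. 2 * (x k * indic ?T k) - x k)"
    by (intro sum.cong refl) (auto simp: indic_def)
  ultimately show ?thesis
    unfolding trace_norm_eig_op[OF Z] by (simp add: sum_subtractf sum_distrib_left[symmetric] x0)
qed

lemma trace_proj_normalized_diff:
  assumes Z: "unitary_mat n Z" and U: "unitary_mat n U" and W: "unitary_mat n W"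
    and J: "J \<subseteq> {..<n}" and K: "K \<subseteq> {..<n}"
  shows "ctrace n (eig_op n Z (indic T) * (eig_op n U (\<lambda>i. indic J i / p) - eig_op n W (\<lambda>i. indic K i / q)))
       = complex_of_real ((\<Sum>k\<in>J. proj_weight n Z T (colv U k)) / p - (\<Sum>k\<in>K. proj_weight n Z T (colv W k)) / q)"
proof -
  have Uc: "U \<in> carrier_mat n n" and Wc: "W \<in> carrier_mat n n" and Zc: "Z \<in> carrier_mat n n"
    using U W Z unitaryD by auto
  have normalized: "(\<Sum>k<n. indic S k / c * f k) = (\<Sum>k\<in>S. f k) / c" if "S \<subseteq> {..<n}" for S f and c :: real
    using sum_indic[OF that, of "\<lambda>k. f k / c"] by (simp add: sum_divide_distrib)
  have "ctrace n (eig_op n Z (indic T) * (eig_op n U (\<lambda>i. indic J i / p) - eig_op n W (\<lambda>i. indic K i / q)))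
      = ctrace n (eig_op n Z (indic T) * eig_op n U (\<lambda>i. indic J i / p))
        - ctrace n (eig_op n Z (indic T) * eig_op n W (\<lambda>i. indic K i / q))"
    by (subst mult_minus_distrib_mat[of _ n n]) (use Uc Wc Zc in \<open>auto intro!: ctrace_minus\<close>)
  also have "\<dots> = complex_of_real ((\<Sum>k<n. indic J k / p * proj_weight n Z T (colv U k))
      - (\<Sum>k<n. indic K k / q * proj_weight n Z T (colv W k)))"
    unfolding ctrace_proj_eig_op[OF Z U] ctrace_proj_eig_op[OF Z W] by simp
  finally show ?thesis unfolding normalized[OF J] normalized[OF K] .
qed

lemma normalized_proj_diff_traceless:
  assumes U: "unitary_mat n U" and W: "unitary_mat n W" and Z: "unitary_mat n Z"
    and J: "J \<subseteq> {..<n}" "J \<noteq> {}" and K: "K \<subseteq> {..<n}" "K \<noteq> {}"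
    and X: "eig_op n U (\<lambda>i. indic J i / real (card J)) - eig_op n W (\<lambda>i. indic K i / real (card K)) = eig_op n Z x"
  shows "(\<Sum>k<n. x k) = 0"
proof -
  have fin: "finite J" "finite K" using J K finite_subset by auto
  have Uc: "U \<in> carrier_mat n n" and Wc: "W \<in> carrier_mat n n" using U W unitaryD by auto
  have "complex_of_real (\<Sum>k<n. x k) = ctrace n (eig_op n Z x)" by (simp add: ctrace_eig_op[OF Z])
  also have "\<dots> = complex_of_real ((\<Sum>k<n. indic J k / real (card J)) - (\<Sum>k<n. indic K k / real (card K)))"
    unfolding X[symmetric] using Uc Wc by (simp add: ctrace_minus ctrace_eig_op[OF U] ctrace_eig_op[OF W])
  also have "\<dots> = 0"
    using sum_indic[OF J(1), of "\<lambda>_. 1 / real (card J)"] sum_indic[OF K(1), of "\<lambda>_. 1 / real (card K)"] fin J K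
    by simp
  finally show ?thesis by (metis of_real_eq_0_iff)
qed

lemma trace_distance_arith:
  fixes p q pi qi a b tG tF \<delta> :: real
  assumes p: "p \<ge> 1" and q: "q \<ge> 1" and pi: "pi \<le> p" and qi: "qi \<le> q" and d: "\<delta> \<ge> 0"
    and tF: "tF \<ge> 0" and tG: "tG \<le> p"
    and D1: "tG - tF \<le> pi * \<delta> + a"
    and D2: "(q - tF) - (p - tG) \<le> qi * \<delta> + b"
  shows "tG / p - tF / q \<le> \<delta> + (\<bar>p - q\<bar> + a + b) / (2 * max p q)"
proof (cases "q \<le> p")
  case True
  have "tF / p \<le> tF / q" using tF q True by (simp add: frac_le)
  then have "tG / p - tF / q \<le> (tG - tF) / p" by (simp add: diff_divide_distrib)
  also have "tG - tF \<le> ((pi * \<delta> + a) + (qi * \<delta> + b + p - q)) / 2" using D1 D2 by simp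
  also have "\<dots> \<le> (2 * p * \<delta> + a + b + (p - q)) / 2"
  proof -
    have "pi * \<delta> \<le> p * \<delta>" using pi d by (simp add: mult_right_mono)
    moreover have "qi * \<delta> \<le> p * \<delta>" using qi True d by (simp add: mult_right_mono)
    ultimately show ?thesis by simp
  qed
  finally have "tG / p - tF / q \<le> ((2 * p * \<delta> + a + b + (p - q)) / 2) / p" using p by (simp add: divide_right_mono)
  also have "\<dots> = \<delta> + (\<bar>p - q\<bar> + a + b) / (2 * max p q)" using p True by (simp add: field_simps)
  finally show ?thesis .
next
  case False
  have e: "tG / p - tF / q = (q - tF) / q - (p - tG) / p" using p q by (simp add: field_simps)
  have "(p - tG) / q \<le> (p - tG) / p" using tG p False by (simp add: frac_le)
  then have "tG / p - tF / q \<le> ((q - tF) - (p - tG)) / q" unfolding e by (simp add: diff_divide_distrib)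
  also have "(q - tF) - (p - tG) \<le> ((q - p + pi * \<delta> + a) + (qi * \<delta> + b)) / 2" using D1 D2 by simp
  also have "\<dots> \<le> (2 * q * \<delta> + a + b + (q - p)) / 2"
  proof -
    have "pi * \<delta> \<le> q * \<delta>" using pi False d by (simp add: mult_right_mono)
    moreover have "qi * \<delta> \<le> q * \<delta>" using qi d by (simp add: mult_right_mono)
    ultimately show ?thesis by simp
  qed
  finally have "tG / p - tF / q \<le> ((2 * q * \<delta> + a + b + (q - p)) / 2) / q" using q by (simp add: divide_right_mono)
  also have "\<dots> = \<delta> + (\<bar>p - q\<bar> + a + b) / (2 * max p q)" using q False by (simp add: field_simps)
  finally show ?thesis .
qed

theorem trace_distance_bound:
  fixes n :: nat and U W V :: "complex mat" and h g :: "nat \<Rightarrow> real"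
  assumes U: "unitary_mat n U" and W: "unitary_mat n W" and Vc: "V \<in> carrier_mat n n"
    and HV: "eig_op n U h = eig_op n W g + V"
    and eps: "0 < \<epsilon>" "\<epsilon> < \<Delta> / 2"
    and J: "J = {j. j < n \<and> h j \<in> {E..E + \<Delta>}}" and K: "K = {l. l < n \<and> g l \<in> {E..E + \<Delta>}}"
    and p1: "card J \<ge> 1" and q1: "card K \<ge> 1"
    and B: "B = {E..<E + \<epsilon>} \<union> {E + \<Delta> - \<epsilon><..E + \<Delta>}"
  shows "trace_norm (eig_op n U (\<lambda>i. indic J i / real (card J)) - eig_op n W (\<lambda>i. indic K i / real (card K))) / 2
     \<le> op_norm V / \<epsilon> + (\<bar>real (card J) - real (card K)\<bar> + real (card {i. i < n \<and> h i \<in> B}) + real (card {i. i < n \<and> g i \<in> B}))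
          / (2 * max (real (card J)) (real (card K)))"
proof -
  have Uc: "U \<in> carrier_mat n n" and Wc: "W \<in> carrier_mat n n" using U W unitaryD by auto
  define Ji where "Ji = {j. j < n \<and> h j \<in> {E + \<epsilon>..E + \<Delta> - \<epsilon>}}"
  define Ki where "Ki = {j. j < n \<and> g j \<in> {E + \<epsilon>..E + \<Delta> - \<epsilon>}}"
  have Jn: "J \<subseteq> {..<n}" and Kn: "K \<subseteq> {..<n}" using J K by auto
  have JB: "J - Ji = {i. i < n \<and> h i \<in> B}" and KB: "K - Ki = {i. i < n \<and> g i \<in> B}"
    unfolding J K Ji_def Ki_def B using eps by auto
  have cJi: "card Ji \<le> card J" and cKi: "card Ki \<le> card K"
    using Jn Kn finite_subset eps unfolding J K Ji_def Ki_def by (auto intro!: card_mono)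
  obtain Z x where Z: "unitary_mat n Z"
    and Xe: "eig_op n U (\<lambda>i. indic J i / real (card J)) - eig_op n W (\<lambda>i. indic K i / real (card K)) = eig_op n Z x"
    using spectral[OF eig_op_diff_herm[OF Uc Wc]] by metis
  define T where "T = {k. k < n \<and> x k > 0}"
  define tG where "tG = (\<Sum>k\<in>J. proj_weight n Z T (colv U k))"
  define tF where "tF = (\<Sum>k\<in>K. proj_weight n Z T (colv W k))"
  have x0: "(\<Sum>k<n. x k) = 0"
    by (rule normalized_proj_diff_traceless[OF U W Z Jn _ Kn _ Xe]) (use p1 q1 in auto)
  have "trace_norm (eig_op n Z x) / 2 = Re (ctrace n (eig_op n Z (indic T) * eig_op n Z x))"
    unfolding T_def by (rule half_trace_norm_traceless[OF Z x0])
  also have "\<dots> = tG / real (card J) - tF / real (card K)"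
    unfolding Xe[symmetric] trace_proj_normalized_diff[OF Z U W Jn Kn] tG_def tF_def by simp
  finally have half: "trace_norm (eig_op n Z x) / 2 = tG / real (card J) - tF / real (card K)" .
  note V1 = perturbation_col_bound(1)[OF Vc eig_op_carrier[OF Wc] HV U]
  note V2 = perturbation_col_bound(2)[OF Vc eig_op_carrier[OF Wc] HV W]
  have A1: "tG - tF \<le> real (card Ji) * (op_norm V / \<epsilon>) + real (card (J - Ji))"
    unfolding tG_def tF_def by (rule window_trace_bound[OF U W Z Ji_def J K eps(1) op_norm_nonneg V1])
  have A2: "(real (card K) - tF) - (real (card J) - tG) \<le> real (card Ki) * (op_norm V / \<epsilon>) + real (card (K - Ki))"
    using window_trace_bound[OF W U Z Ki_def K J eps(1) op_norm_nonneg V2, of "{..<n} - T"]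
      proj_weight_sum_bounds(3)[OF Z U Jn] proj_weight_sum_bounds(3)[OF Z W Kn]
    unfolding tG_def tF_def by simp
  have "tG / real (card J) - tF / real (card K)
     \<le> op_norm V / \<epsilon> + (\<bar>real (card J) - real (card K)\<bar> + real (card (J - Ji)) + real (card (K - Ki)))
          / (2 * max (real (card J)) (real (card K)))"
  proof (rule trace_distance_arith[OF _ _ _ _ _ _ _ A1 A2])
    show "1 \<le> real (card J)" "1 \<le> real (card K)" using p1 q1 by simp_all
    show "real (card Ji) \<le> real (card J)" "real (card Ki) \<le> real (card K)" using cJi cKi by simp_all
    show "0 \<le> op_norm V / \<epsilon>" by (intro divide_nonneg_pos op_norm_nonneg eps(1))
    show "0 \<le> tF" "tG \<le> real (card J)"
      unfolding tG_def tF_def by (rule proj_weight_sum_bounds(1)[OF Z W Kn], rule proj_weight_sum_bounds(2)[OF Z U Jn])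
  qed
  then show ?thesis unfolding Xe half JB KB .
qed

lemma spectral_projector_normalized:
  assumes "spectral_projector n A S P"
  obtains U d where "unitary_mat n U" "A = eig_op n U d"
    "mat_rank n P = card {i. i < n \<and> d i \<in> S}"
    "(1 / complex_of_nat (mat_rank n P)) \<cdot>\<^sub>m P
       = eig_op n U (\<lambda>i. indic {i. i < n \<and> d i \<in> S} i / real (card {i. i < n \<and> d i \<in> S}))"
proof -
  obtain U d where U: "unitary_mat n U" and A: "A = U * real_diag_mat n d * mat_adjoint U"
    and P: "P = U * real_diag_mat n (\<lambda>i. if d i \<in> S then 1 else 0) * mat_adjoint U"
    using assms unfolding spectral_projector_def by blast
  define J where "J = {i. i < n \<and> d i \<in> S}"
  have Uc: "U \<in> carrier_mat n n" using unitaryD[OF U] by simp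
  have PJ: "P = eig_op n U (indic J)"
    unfolding P eig_op_def[symmetric] by (rule eig_op_cong[OF Uc]) (auto simp: indic_def J_def)
  have rank: "mat_rank n P = card J" unfolding mat_rank_def PJ by (rule rank_eig_op[OF U]) (auto simp: J_def)
  have eq: "1 / complex_of_nat (card J) = complex_of_real (1 / real (card J))" by simp
  have "(1 / complex_of_nat (mat_rank n P)) \<cdot>\<^sub>m P = eig_op n U (\<lambda>i. 1 / real (card J) * indic J i)"
    unfolding rank unfolding PJ by (simp only: eq smult_eig_op[OF Uc])
  then show ?thesis using that[OF U A[folded eig_op_def]] rank unfolding J_def by (simp add: mult.commute)
qed

theorem theorem1:
  fixes dS dB :: nat and H0 V G F :: "complex mat" and E \<Delta> \<epsilon> :: real
  assumes "0 < dS" and "0 < dB"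
    and "hermitian_mat (dS * dB) H0" and "hermitian_mat (dS * dB) V"
    and "0 < \<Delta>"
    and "spectral_projector (dS * dB) (H0 + V) {E..E + \<Delta>} G"
    and "spectral_projector (dS * dB) H0 {E..E + \<Delta>} F"
    and "mat_rank (dS * dB) G \<ge> 1" and "mat_rank (dS * dB) F \<ge> 1"
    and "0 < \<epsilon>" and "\<epsilon> < \<Delta> / 2"
  shows
    "let H = H0 + V;
         rG = mat_rank (dS * dB) G; rF = mat_rank (dS * dB) F;
         \<omega> = (1 / complex_of_nat rG) \<cdot>\<^sub>m G;
         \<omega>0 = (1 / complex_of_nat rF) \<cdot>\<^sub>m F;
         \<omega>S = partial_trace_B dS dB \<omega>;
         \<omega>S0 = partial_trace_B dS dB \<omega>0;
         \<Omega>max = max rG rF; \<Omega>min = min rG rF;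
         \<Delta>\<Omega> = \<Omega>max - \<Omega>min;
         B = {E..<E + \<epsilon>} \<union> {E + \<Delta> - \<epsilon><..E + \<Delta>};
         \<Omega>\<epsilon> = eig_count H B + eig_count H0 B
     in trace_norm (\<omega>S - \<omega>S0) / 2 \<le> trace_norm (\<omega> - \<omega>0) / 2 \<and>
        trace_norm (\<omega> - \<omega>0) / 2
          \<le> op_norm V / \<epsilon> + real (\<Delta>\<Omega> + \<Omega>\<epsilon>) / (2 * real \<Omega>max)"
proof -
  let ?N = "dS * dB" and ?B = "{E..<E + \<epsilon>} \<union> {E + \<Delta> - \<epsilon><..E + \<Delta>}"
  obtain U h where U: "unitary_mat ?N U" and HU: "H0 + V = eig_op ?N U h"
    and rG: "mat_rank ?N G = card {i. i < ?N \<and> h i \<in> {E..E + \<Delta>}}"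
    and \<omega>: "(1 / complex_of_nat (mat_rank ?N G)) \<cdot>\<^sub>m G
       = eig_op ?N U (\<lambda>i. indic {i. i < ?N \<and> h i \<in> {E..E + \<Delta>}} i / real (card {i. i < ?N \<and> h i \<in> {E..E + \<Delta>}}))"
    using spectral_projector_normalized[OF assms(6)] by blast
  obtain W g where W: "unitary_mat ?N W" and HW: "H0 = eig_op ?N W g"
    and rF: "mat_rank ?N F = card {i. i < ?N \<and> g i \<in> {E..E + \<Delta>}}"
    and \<omega>0: "(1 / complex_of_nat (mat_rank ?N F)) \<cdot>\<^sub>m F
       = eig_op ?N W (\<lambda>i. indic {i. i < ?N \<and> g i \<in> {E..E + \<Delta>}} i / real (card {i. i < ?N \<and> g i \<in> {E..E + \<Delta>}}))"
    using spectral_projector_normalized[OF assms(7)] by blast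
  have Uc: "U \<in> carrier_mat ?N ?N" and Wc: "W \<in> carrier_mat ?N ?N" using U W unitaryD by auto
  have Vc: "V \<in> carrier_mat ?N ?N" using assms(4) unfolding hermitian_mat_def by simp
  have HV: "eig_op ?N U h = eig_op ?N W g + V" using HU HW by simp
  note part1 = trace_norm_partial_trace[OF eig_op_diff_herm[OF Uc Wc]]
  note part2 = trace_distance_bound[OF U W Vc HV assms(10,11) refl refl _ _ refl]
  have counts: "eig_count (H0 + V) ?B = card {i. i < ?N \<and> h i \<in> ?B}"
    "eig_count H0 ?B = card {i. i < ?N \<and> g i \<in> ?B}"
    unfolding HU by (rule eig_count_eig_op[OF U]) (unfold HW, rule eig_count_eig_op[OF W])
  have max_min: "real (max p q - min p q + (a + b)) = \<bar>real p - real q\<bar> + real a + real b" for p q a b :: nat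
    by (cases "p \<le> q") (auto simp: of_nat_diff)
  show ?thesis
    unfolding Let_def \<omega> \<omega>0
    unfolding rG rF counts max_min of_nat_max pt_minus[OF eig_op_carrier[OF Uc] eig_op_carrier[OF Wc]]
    by (intro conjI divide_right_mono part1 part2) (use assms(8,9) rG rF in simp_all)
qed

end
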